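(* Assume (A1)–(A4) and that for every $K\ge1$, $0<H(P^\star|\Pi_{K+1})<H(P^\star|\Pi_K)$. Then $P^\star\notin\Pi_\infty$ and, $P^\star$-a.s., $\liminf_{n\to\infty}\widehat K_n^L=\liminf_{n\to\infty}\widehat K_n^G=\infty$ (here $\widehat K_n^G$ is the smallest maximizer of $K\mapsto \mathrm{crit}(n,K)$ over all $K\ge1$).
   Context: Setting: $(\mathcal Z,\mathcal F)$ is a Polish space with its Borel $\sigma$-field and $\mu$ a $\sigma$-finite measure on it. $Z_1,Z_2,\dots$ are i.i.d. $\mathcal Z$-valued random variables with common law $P^\star\ll\mu$, density $p^\star$, $\ell^\star=\log p^\star$; $P^\star$ also denotes the law of the whole sequence. $\{(\Theta_K,d)\}_{K\ge1}$ is an increasing (nested) sequence of metric spaces, $\Theta_\infty=\bigcup_K\Theta_K$; for $\theta\in\Theta_\infty$, $P_\theta$ is a probability measure with density $p_\theta$ w.r.t. $\mu$ and $\ell_\theta=\log p_\theta$. $\Pi_K=\{P_\theta:\theta\in\Theta_K\}$, $\Pi_\infty=\bigcup_K\Pi_K$. $H(P|Q)=\int\log(dP/dQ)\,dP$ if $P\ll Q$ and $+\infty$ otherwise; $H(P|\Pi)=\inf_{Q\in\Pi}H(P|Q)$. Given a penalty $\mathrm{pen}(n,K)>0$, $\mathrm{crit}(n,K)=\sup_{\theta\in\Theta_K}\sum_{i=1}^n\ell_\theta(Z_i)-\mathrm{pen}(n,K)$, $\widehat K_n^L=\inf\{K\ge1:\mathrm{crit}(n,K)\ge\mathrm{crit}(n,K+1)\}$.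 All suprema are assumed measurable. Standing assumptions: (A1) each $(\Theta_K,d)$ is compact and each $\Pi_K$ is compact for the weak topology; (A2) for each $z$ and $K$, $\theta\mapsto\ell_\theta(z)$ is continuous on $\Theta_K$; (A3) there are $l,u:\mathcal Z\to\mathbb R$ with $u-l\in L^1(P^\star)$, $l\le\ell^\star\le u$ and $l\le\ell_\theta\le u$ for all $\theta\in\Theta_\infty$; (A4) for each $n$, $\mathrm{pen}(n,\cdot)$ is increasing, and for each $K$, $\mathrm{pen}(n,K)\to\infty$ and $\mathrm{pen}(n,K)=o(n)$ as $n\to\infty$. *)

theory Defs
  imports "HOL-Probability.Probability"
begin

definition prob_measures :: "'z::topological_space measure set" where
  "prob_measures = {P. prob_space P \<and> sets P = sets (borel :: 'z measure)}"

definition bcont :: "('z::topological_space \<Rightarrow> real) \<Rightarrow> bool" where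
  "bcont f \<longleftrightarrow> continuous_on UNIV f \<and> bounded (range f)"

definition weak_topology :: "'z::topological_space measure topology" where
  "weak_topology = topology_generated_by
     {{P \<in> prob_measures. (\<integral>x. f x \<partial>P) \<in> U} | f U. bcont f \<and> open U}"

text \<open>Relative entropy H(P|Q) = int log(dP/dQ) dP if P << Q, +infinity otherwise.
  The integral is split into positive and negative parts (the negative part is finite
  for probability measures).\<close>
definition rel_entropy :: "'z measure \<Rightarrow> 'z measure \<Rightarrow> ereal" where
  "rel_entropy P Q =
    (if sets P = sets Q \<and> absolutely_continuous Q P then
       (let f = (\<lambda>x. ln (enn2real (RN_deriv Q P x))) in
         enn2ereal (\<integral>\<^sup>+x. ennreal (f x) \<partial>P) - enn2ereal (\<integral>\<^sup>+x. ennreal (- f x) \<partial>P))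
     else \<infinity>)"

definition rel_entropy_set :: "'z measure \<Rightarrow> 'z measure set \<Rightarrow> ereal" where
  "rel_entropy_set P Mdl = (INF Q\<in>Mdl. rel_entropy P Q)"

text \<open>Penalized criterion crit(n,K) for the sample omega (extended reals so that it is
  defined even for an empty parameter set).\<close>
definition crit :: "('t \<Rightarrow> 'z \<Rightarrow> real) \<Rightarrow> (nat \<Rightarrow> 't set) \<Rightarrow> (nat \<Rightarrow> nat \<Rightarrow> real)
    \<Rightarrow> (nat \<Rightarrow> 'w \<Rightarrow> 'z) \<Rightarrow> nat \<Rightarrow> nat \<Rightarrow> 'w \<Rightarrow> ereal" where
  "crit ell \<Theta> pen Z n K \<omega> =
     (SUP \<theta>\<in>\<Theta> K. ereal (\<Sum>i<n. ell \<theta> (Z i \<omega>))) - ereal (pen n K)"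

definition Khat_L :: "('t \<Rightarrow> 'z \<Rightarrow> real) \<Rightarrow> (nat \<Rightarrow> 't set) \<Rightarrow> (nat \<Rightarrow> nat \<Rightarrow> real)
    \<Rightarrow> (nat \<Rightarrow> 'w \<Rightarrow> 'z) \<Rightarrow> nat \<Rightarrow> 'w \<Rightarrow> enat" where
  "Khat_L ell \<Theta> pen Z n \<omega> =
     (if \<exists>K\<ge>1. crit ell \<Theta> pen Z n K \<omega> \<ge> crit ell \<Theta> pen Z n (Suc K) \<omega>
      then enat (LEAST K. K \<ge> 1 \<and> crit ell \<Theta> pen Z n K \<omega> \<ge> crit ell \<Theta> pen Z n (Suc K) \<omega>)
      else \<infinity>)"

definition Khat_G :: "('t \<Rightarrow> 'z \<Rightarrow> real) \<Rightarrow> (nat \<Rightarrow> 't set) \<Rightarrow> (nat \<Rightarrow> nat \<Rightarrow> real)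
    \<Rightarrow> (nat \<Rightarrow> 'w \<Rightarrow> 'z) \<Rightarrow> nat \<Rightarrow> 'w \<Rightarrow> enat" where
  "Khat_G ell \<Theta> pen Z n \<omega> =
     (if \<exists>K\<ge>1. \<forall>K'\<ge>1. crit ell \<Theta> pen Z n K' \<omega> \<le> crit ell \<Theta> pen Z n K \<omega>
      then enat (LEAST K. K \<ge> 1 \<and> (\<forall>K'\<ge>1. crit ell \<Theta> pen Z n K' \<omega> \<le> crit ell \<Theta> pen Z n K \<omega>))
      else \<infinity>)"

end

theory Submission
  imports Defs
begin

text \<open>
  Fix \<open>K\<close>. The gap \<open>H(P*|Pi_(K+1)) < H(P*|Pi_K)\<close> yields a parameter \<open>\<theta>'\<close> of the model
  \<open>K + 1\<close> and a margin \<open>a > 0\<close> with \<open>a < E(l_\<theta>' - l_\<theta>)\<close> for every \<open>\<theta>\<close> of \<open>Theta_K\<close>.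
  By continuity in \<open>\<theta>\<close> and dominated convergence (the envelope \<open>u - l\<close> is integrable) every
  \<open>\<theta>\<close> has a ball on which even the local supremum of \<open>l_\<theta>\<close> loses against \<open>l_\<theta>'\<close> by more
  than \<open>a\<close> in mean. Compactness leaves finitely many balls, and the strong law of large numbers for
  these finitely many local suprema shows that almost surely, for large \<open>n\<close>, the maximal
  log-likelihood over \<open>Theta_K\<close> is below that of \<open>\<theta>'\<close> by more than \<open>a n\<close>. A penalty of
  order \<open>o(n)\<close> cannot compensate this, so \<open>crit(n, K) < crit(n, K + 1)\<close> eventually, almost surely
  for all \<open>K\<close> at once, which pushes both selected orders beyond every bound. Finally \<open>P*\<close> lies in
  no model because \<open>H(P*|P*) = 0 < H(P*|Pi_K)\<close>.

  The strong law is proved for nonnegative i.i.d. variables by Etemadi's argument: truncation of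
  the \<open>i\<close>-th variable at \<open>i + 1\<close>, Chebyshev's inequality and Borel-Cantelli along geometric
  grids \<open>\<lceil>\<alpha>^m\<rceil>\<close>, and interpolation between grid points by monotonicity.
\<close>

section \<open>Strong law of large numbers\<close>

lemma cesaro_mean_tendsto_zero:
  fixes a :: "nat \<Rightarrow> real"
  assumes "a \<longlonglongrightarrow> 0"
  shows "(\<lambda>n. (\<Sum>i<n. a i) / real n) \<longlonglongrightarrow> 0"
proof (rule tendstoI)
  fix e :: real assume e: "e > 0"
  from assms e obtain N where N: "\<And>i. i \<ge> N \<Longrightarrow> \<bar>a i\<bar> < e/2"
    unfolding lim_sequentially by (metis dist_real_def diff_zero half_gt_zero)
  define C where "C = (\<Sum>i<N. \<bar>a i\<bar>)"
  obtain N2 :: nat where N2: "real N2 > 2 * C / e" using reals_Archimedean2 by blast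
  show "\<forall>\<^sub>F n in sequentially. dist ((\<Sum>i<n. a i) / real n) 0 < e"
    unfolding eventually_sequentially
  proof (intro exI[of _ "max (Suc N) N2"] allI impI)
    fix n assume n: "n \<ge> max (Suc N) N2"
    then have nN: "N \<le> n" and npos: "real n > 0" by auto
    have "\<bar>\<Sum>i<n. a i\<bar> \<le> (\<Sum>i<n. \<bar>a i\<bar>)" by (rule sum_abs)
    also have "\<dots> = C + (\<Sum>i\<in>{N..<n}. \<bar>a i\<bar>)"
      using nN unfolding C_def by (metis atLeast0LessThan le0 sum.atLeastLessThan_concat)
    also have "(\<Sum>i\<in>{N..<n}. \<bar>a i\<bar>) \<le> (\<Sum>i\<in>{N..<n}. e/2)"
      by (intro sum_mono) (metis N atLeastLessThan_iff less_imp_le)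
    also have "\<dots> \<le> real n * (e/2)" using e by simp
    also have "C < real n * (e/2)"
    proof -
      have "e * real N2 \<le> e * real n" using n e by (intro mult_left_mono) auto
      moreover have "2 * C < e * real N2" using N2 e by (simp add: field_simps)
      ultimately show ?thesis by (simp add: mult.commute)
    qed
    finally have "\<bar>\<Sum>i<n. a i\<bar> < real n * e" by (simp add: algebra_simps)
    then show "dist ((\<Sum>i<n. a i) / real n) 0 < e"
      using npos by (simp add: dist_real_def abs_div pos_divide_less_eq mult.commute)
  qed
qed

lemma cesaro_mean_tendsto:
  fixes a :: "nat \<Rightarrow> real"
  assumes "a \<longlonglongrightarrow> L"
  shows "(\<lambda>n. (\<Sum>i<n. a i) / real n) \<longlonglongrightarrow> L"
proof -
  have "(\<lambda>n. (\<Sum>i<n. a i - L) / real n) \<longlonglongrightarrow> 0"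
    using assms by (intro cesaro_mean_tendsto_zero) (simp add: LIM_zero)
  then have "(\<lambda>n. (\<Sum>i<n. a i - L) / real n + L) \<longlonglongrightarrow> 0 + L" by (intro tendsto_add) auto
  moreover have "\<forall>\<^sub>F n in sequentially. (\<Sum>i<n. a i - L) / real n + L = (\<Sum>i<n. a i) / real n"
    using eventually_gt_at_top[of 0] by eventually_elim (auto simp: sum_subtractf field_simps)
  ultimately show ?thesis by (simp add: tendsto_cong)
qed

lemma sum_indicator_Suc_less_le:
  fixes x :: real
  assumes "x \<ge> 0"
  shows "(\<Sum>i<N. indicator {real (Suc i)<..} x) \<le> x"
proof -
  have "(\<Sum>i<N. indicator {real (Suc i)<..} x) \<le> min (real N) x"
    by (induction N) (use assms in \<open>auto simp: indicator_def\<close>)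
  then show ?thesis by simp
qed

lemma sum_inverse_powers_above_le:
  fixes \<alpha> c :: real
  assumes \<alpha>: "\<alpha> > 1" and c: "c > 0"
  shows "(\<Sum>m<N. if c \<le> \<alpha>^m then 1/\<alpha>^m else 0) \<le> \<alpha> / ((\<alpha> - 1) * c)"
proof (cases "\<exists>m<N. c \<le> \<alpha>^m")
  case False
  then have "(\<Sum>m<N. if c \<le> \<alpha>^m then 1/\<alpha>^m else 0) = 0" by (intro sum.neutral) auto
  then show ?thesis using \<alpha> c by simp
next
  case True
  define m0 where "m0 = (LEAST m. c \<le> \<alpha>^m)"
  have m0: "c \<le> \<alpha>^m0" using True unfolding m0_def by (metis LeastI)
  have above_iff: "c \<le> \<alpha>^m \<longleftrightarrow> m0 \<le> m" for m
  proof
    assume "c \<le> \<alpha>^m" then show "m0 \<le> m" unfolding m0_def by (rule Least_le)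
  next
    assume "m0 \<le> m" then have "\<alpha>^m0 \<le> \<alpha>^m" using \<alpha> by (intro power_increasing) auto
    then show "c \<le> \<alpha>^m" using m0 by simp
  qed
  define q where "q = 1/\<alpha>"
  have q: "0 < q" "q < 1" using \<alpha> by (auto simp: q_def)
  have "(\<Sum>m<N. if c \<le> \<alpha>^m then 1/\<alpha>^m else 0) = (\<Sum>m\<in>{m0..<N}. q^m)"
    by (rule sum.mono_neutral_cong_right) (auto simp: above_iff q_def power_one_over)
  also have "\<dots> = q^m0 * (\<Sum>j<N - m0. q^j)"
    by (simp add: sum.atLeastLessThan_shift_0[of _ m0 N] power_add sum_distrib_left
        atLeast0LessThan)
  also have "\<dots> \<le> q^m0 * (1 / (1 - q))"
    using q by (intro mult_left_mono) (simp_all add: sum_gp_strict divide_right_mono)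
  also have "\<dots> \<le> 1/c * (1 / (1 - q))"
    using q m0 c by (intro mult_right_mono) (simp_all add: q_def power_one_over frac_le)
  also have "\<dots> = \<alpha> / ((\<alpha> - 1) * c)" using \<alpha> c by (simp add: q_def field_simps)
  finally show ?thesis .
qed

definition geometric_grid :: "real \<Rightarrow> nat \<Rightarrow> nat" where
  "geometric_grid \<alpha> m = nat \<lceil>\<alpha>^m\<rceil>"

lemma geometric_grid_bounds:
  assumes "\<alpha> > 1"
  shows "\<alpha>^m \<le> real (geometric_grid \<alpha> m)" "real (geometric_grid \<alpha> m) \<le> \<alpha>^m + 1"
    "geometric_grid \<alpha> m \<ge> 1"
proof -
  have "\<alpha>^m \<ge> 1" using assms by simp
  then have grid: "real (geometric_grid \<alpha> m) = real_of_int \<lceil>\<alpha>^m\<rceil>"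
    by (simp add: geometric_grid_def one_le_ceiling)
  show "\<alpha>^m \<le> real (geometric_grid \<alpha> m)" unfolding grid by (rule le_of_int_ceiling)
  show "real (geometric_grid \<alpha> m) \<le> \<alpha>^m + 1" unfolding grid by linarith
  show "geometric_grid \<alpha> m \<ge> 1" using \<open>\<alpha>^m \<ge> 1\<close> grid by linarith
qed

lemma filterlim_geometric_grid:
  assumes "\<alpha> > 1"
  shows "filterlim (geometric_grid \<alpha>) at_top sequentially"
  unfolding filterlim_at_top eventually_sequentially
proof (intro allI)
  fix b :: nat
  obtain m0 where m0: "real b < \<alpha>^m0" using real_arch_pow[OF assms] by blast
  have "b \<le> geometric_grid \<alpha> m" if "m0 \<le> m" for m
  proof -
    have "\<alpha>^m0 \<le> \<alpha>^m" using assms that by (intro power_increasing) auto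
    then show ?thesis using m0 geometric_grid_bounds(1)[OF assms, of m] by linarith
  qed
  then show "\<exists>N. \<forall>m\<ge>N. b \<le> geometric_grid \<alpha> m" by blast
qed

lemma geometric_grid_ratio:
  assumes \<alpha>: "\<alpha> > 1"
  shows "(\<lambda>m. real (geometric_grid \<alpha> (Suc m)) / real (geometric_grid \<alpha> m)) \<longlonglongrightarrow> \<alpha>"
proof (rule tendsto_sandwich)
  note bounds = geometric_grid_bounds[OF \<alpha>]
  have q: "(\<lambda>m. (1/\<alpha>)^m) \<longlonglongrightarrow> 0" using \<alpha> by (intro LIMSEQ_realpow_zero) auto
  have "(\<lambda>m. \<alpha> / (1 + (1/\<alpha>)^m)) \<longlonglongrightarrow> \<alpha> / (1 + 0)" by (intro tendsto_intros q) auto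
  moreover have "\<alpha> / (1 + (1/\<alpha>)^m) = \<alpha>^Suc m / (\<alpha>^m + 1)" for m
    using \<alpha> by (simp add: field_simps power_one_over)
  ultimately show "(\<lambda>m. \<alpha>^Suc m / (\<alpha>^m + 1)) \<longlonglongrightarrow> \<alpha>" by simp
  have "(\<lambda>m. \<alpha> + (1/\<alpha>)^m) \<longlonglongrightarrow> \<alpha> + 0" by (intro tendsto_intros q)
  moreover have "\<alpha> + (1/\<alpha>)^m = (\<alpha>^Suc m + 1) / \<alpha>^m" for m
    using \<alpha> by (simp add: field_simps power_one_over)
  ultimately show "(\<lambda>m. (\<alpha>^Suc m + 1) / \<alpha>^m) \<longlonglongrightarrow> \<alpha>" by simp
  show "\<forall>\<^sub>F m in sequentially.
      \<alpha>^Suc m / (\<alpha>^m + 1) \<le> real (geometric_grid \<alpha> (Suc m)) / real (geometric_grid \<alpha> m)"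
  proof (intro always_eventually allI)
    fix m
    have "\<alpha>^Suc m / (\<alpha>^m + 1) \<le> real (geometric_grid \<alpha> (Suc m)) / (\<alpha>^m + 1)"
      using bounds(1)[of "Suc m"] \<alpha> by (intro divide_right_mono) auto
    also have "\<dots> \<le> real (geometric_grid \<alpha> (Suc m)) / real (geometric_grid \<alpha> m)"
      using bounds(2,3)[of m] by (intro divide_left_mono) auto
    finally show "\<alpha>^Suc m / (\<alpha>^m + 1) \<le> \<dots>" .
  qed
  show "\<forall>\<^sub>F m in sequentially.
      real (geometric_grid \<alpha> (Suc m)) / real (geometric_grid \<alpha> m) \<le> (\<alpha>^Suc m + 1) / \<alpha>^m"
  proof (intro always_eventually allI)
    fix m
    have "real (geometric_grid \<alpha> (Suc m)) / real (geometric_grid \<alpha> m)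
        \<le> (\<alpha>^Suc m + 1) / real (geometric_grid \<alpha> m)"
      using bounds(2)[of "Suc m"] by (intro divide_right_mono) auto
    also have "\<dots> \<le> (\<alpha>^Suc m + 1) / \<alpha>^m"
      using bounds(1,3)[of m] \<alpha> by (intro divide_left_mono) auto
    finally show "real (geometric_grid \<alpha> (Suc m)) / real (geometric_grid \<alpha> m) \<le> \<dots>" .
  qed
qed

lemma bracketing_index:
  fixes k :: "nat \<Rightarrow> nat"
  assumes k: "filterlim k at_top sequentially"
  obtains j where "filterlim j at_top sequentially"
    "\<And>n. n \<ge> k 0 \<Longrightarrow> k (j n) \<le> n \<and> n < k (Suc (j n))"
proof
  have exceeds: "\<exists>m. n < k m" for n
    using k unfolding filterlim_at_top eventually_sequentially by (metis Suc_le_eq order_refl)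
  define j where "j n = (LEAST m. n < k m) - 1" for n
  show bracket: "k (j n) \<le> n \<and> n < k (Suc (j n))" if "n \<ge> k 0" for n
  proof -
    define m where "m = (LEAST m. n < k m)"
    have above: "n < k m" unfolding m_def by (rule LeastI_ex) (rule exceeds)
    then have "m \<noteq> 0" using that by (metis not_le)
    then have "Suc (j n) = m" unfolding j_def m_def[symmetric] by simp
    moreover have "\<not> n < k (j n)" unfolding j_def m_def[symmetric]
      by (metis diff_less not_less_Least m_def \<open>m \<noteq> 0\<close> zero_less_one bot_nat_0.not_eq_extremum)
    ultimately show ?thesis using above by simp
  qed
  show "filterlim j at_top sequentially"
    unfolding filterlim_at_top eventually_sequentially
  proof (intro allI exI[of _ "Max (k ` {..Suc M})" for M] impI)
    fix M n assume n: "Max (k ` {..Suc M}) \<le> n"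
    have k_le: "k i \<le> n" if "i \<le> Suc M" for i
      using n that by (meson Max_ge atMost_iff finite_atMost finite_imageI image_eqI le_trans)
    then have "n < k (Suc (j n))" using bracket by blast
    then show "M \<le> j n" using k_le[of "Suc (j n)"] by linarith
  qed
qed

lemma eventually_average_between:
  fixes s :: "nat \<Rightarrow> real" and k :: "nat \<Rightarrow> nat"
  assumes mono: "mono s" and s_nonneg: "\<And>n. 0 \<le> s n"
    and k_pos: "\<And>m. k m \<ge> 1" and k: "filterlim k at_top sequentially"
    and ratio: "(\<lambda>m. real (k (Suc m)) / real (k m)) \<longlonglongrightarrow> \<alpha>" and \<alpha>: "\<alpha> > 0"
    and lim: "(\<lambda>m. s (k m) / real (k m)) \<longlonglongrightarrow> L" and e: "e > 0"
  shows "\<forall>\<^sub>F n in sequentially. L / \<alpha> - e < s n / real n \<and> s n / real n < \<alpha> * L + e"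
proof -
  obtain j where j: "filterlim j at_top sequentially"
    and bracket: "\<And>n. n \<ge> k 0 \<Longrightarrow> k (j n) \<le> n \<and> n < k (Suc (j n))"
    using bracketing_index[OF k] by blast
  have k_nz: "k m \<noteq> 0" for m using k_pos[of m] by simp
  have "(\<lambda>m. (s (k (Suc m)) / real (k (Suc m))) * (real (k (Suc m)) / real (k m))) \<longlonglongrightarrow> L * \<alpha>"
    by (intro tendsto_mult ratio LIMSEQ_Suc[OF lim])
  then have upper: "(\<lambda>m. s (k (Suc m)) / real (k m)) \<longlonglongrightarrow> \<alpha> * L"
    using k_nz by (simp add: mult.commute)
  have "(\<lambda>m. (s (k m) / real (k m)) / (real (k (Suc m)) / real (k m))) \<longlonglongrightarrow> L / \<alpha>"
    using \<alpha> by (intro tendsto_divide ratio lim) auto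
  then have lower: "(\<lambda>m. s (k m) / real (k (Suc m))) \<longlonglongrightarrow> L / \<alpha>"
    using k_nz by simp
  have "\<forall>\<^sub>F n in sequentially. L / \<alpha> - e < s (k (j n)) / real (k (Suc (j n)))"
    using order_tendstoD(1)[OF filterlim_compose[OF lower j]] e by simp
  moreover have "\<forall>\<^sub>F n in sequentially. s (k (Suc (j n))) / real (k (j n)) < \<alpha> * L + e"
    using order_tendstoD(2)[OF filterlim_compose[OF upper j]] e by simp
  moreover have "\<forall>\<^sub>F n in sequentially. s (k (j n)) / real (k (Suc (j n))) \<le> s n / real n \<and>
      s n / real n \<le> s (k (Suc (j n))) / real (k (j n))"
    using eventually_ge_at_top[of "k 0"]
  proof eventually_elim
    case (elim n)
    note b = bracket[OF elim]
    have "real (k (j n)) > 0" using k_pos[of "j n"] by simp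
    with b show ?case
      using s_nonneg monoD[OF mono] by (auto intro!: frac_le)
  qed
  ultimately show ?thesis by eventually_elim linarith
qed

context prob_space
begin

lemma variance_sum_indep:
  fixes Y :: "nat \<Rightarrow> 'a \<Rightarrow> real"
  assumes meas: "\<And>i. random_variable borel (Y i)"
    and indep: "indep_vars (\<lambda>_. borel) Y UNIV"
    and bounded: "\<And>i x. \<bar>Y i x\<bar> \<le> B i"
  shows "variance (\<lambda>x. \<Sum>i<k. Y i x) = (\<Sum>i<k. variance (Y i))"
proof -
  have int_Y: "integrable M (Y i)" for i
    by (rule integrable_const_bound[where B="B i"]) (use bounded meas in auto)
  define W where "W i x = Y i x - expectation (Y i)" for i x
  have W_bounded: "\<bar>W i x\<bar> \<le> B i + \<bar>expectation (Y i)\<bar>" for i x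
    unfolding W_def using bounded[of i x] by linarith
  have int_WW: "integrable M (\<lambda>x. W i x * W j x)" for i j
    by (rule integrable_const_bound[where B="(B i + \<bar>expectation (Y i)\<bar>) * (B j + \<bar>expectation (Y j)\<bar>)"])
       (use W_bounded meas in \<open>auto simp: W_def abs_mult intro!: mult_mono order_trans[OF abs_ge_zero]\<close>)
  have indep_W: "indep_vars (\<lambda>_. borel) W UNIV"
    unfolding W_def[abs_def]
    by (rule indep_vars_compose2[OF indep, where Y="\<lambda>i x. x - expectation (Y i)"]) auto
  have cross: "expectation (\<lambda>x. W i x * W j x) = (if i = j then variance (Y i) else 0)" for i j
  proof (cases "i = j")
    case False
    have "indep_vars (\<lambda>_. borel) W {i, j}" by (rule indep_vars_subset[OF indep_W]) auto
    moreover have "integrable M (W l)" for l unfolding W_def[abs_def] using int_Y by simp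
    ultimately have "expectation (\<lambda>x. \<Prod>l\<in>{i,j}. W l x) = (\<Prod>l\<in>{i,j}. expectation (W l))"
      by (intro indep_vars_lebesgue_integral) auto
    moreover have "expectation (W i) = 0" unfolding W_def[abs_def] using int_Y by (simp add: prob_space)
    ultimately show ?thesis using False by simp
  qed (simp add: W_def power2_eq_square)
  have "expectation (\<lambda>x. \<Sum>i<k. Y i x) = (\<Sum>i<k. expectation (Y i))"
    using int_Y by simp
  then have "variance (\<lambda>x. \<Sum>i<k. Y i x) = expectation (\<lambda>x. \<Sum>i<k. \<Sum>j<k. W i x * W j x)"
    by (simp add: W_def power2_eq_square sum_subtractf[symmetric] sum_product)
  also have "\<dots> = (\<Sum>i<k. \<Sum>j<k. expectation (\<lambda>x. W i x * W j x))"
    using int_WW by (simp add: integrable_sum)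
  also have "\<dots> = (\<Sum>i<k. variance (Y i))"
    unfolding cross by (simp add: sum.delta)
  finally show ?thesis .
qed

lemma variance_le_second_moment:
  fixes Y :: "'a \<Rightarrow> real"
  assumes "integrable M Y" "integrable M (\<lambda>x. (Y x)^2)"
  shows "variance Y \<le> expectation (\<lambda>x. (Y x)^2)"
  using variance_eq[OF assms] by simp

end

definition truncated_square :: "nat \<Rightarrow> real \<Rightarrow> real" where
  "truncated_square k y = (if 0 \<le> y \<and> y \<le> real k then y^2 else 0)"

lemma sum_truncated_square_grid_le:
  assumes \<alpha>: "\<alpha> > 1" and y: "y \<ge> 0"
  shows "(\<Sum>m<N. truncated_square (geometric_grid \<alpha> m) y / real (geometric_grid \<alpha> m))
    \<le> 2 * \<alpha> / (\<alpha> - 1) * y"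
proof (cases "y = 0")
  case True then show ?thesis by (simp add: truncated_square_def)
next
  case False
  with y have y_pos: "y > 0" by simp
  have term_le: "truncated_square (geometric_grid \<alpha> m) y / real (geometric_grid \<alpha> m)
      \<le> y^2 * (if y/2 \<le> \<alpha>^m then 1/\<alpha>^m else 0)" for m
  proof (cases "y \<le> real (geometric_grid \<alpha> m)")
    case True
    note bounds = geometric_grid_bounds[OF \<alpha>, of m]
    have "\<alpha>^m \<ge> 1" using \<alpha> by simp
    then have "y/2 \<le> \<alpha>^m" using True bounds by linarith
    moreover have "y^2 / real (geometric_grid \<alpha> m) \<le> y^2 / \<alpha>^m"
      using bounds \<open>\<alpha>^m \<ge> 1\<close> by (intro divide_left_mono) auto
    ultimately show ?thesis using True y by (simp add: truncated_square_def)
  qed (use y in \<open>simp add: truncated_square_def\<close>)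
  have "(\<Sum>m<N. truncated_square (geometric_grid \<alpha> m) y / real (geometric_grid \<alpha> m))
      \<le> y^2 * (\<Sum>m<N. if y/2 \<le> \<alpha>^m then 1/\<alpha>^m else 0)"
    unfolding sum_distrib_left by (intro sum_mono term_le)
  also have "\<dots> \<le> y^2 * (\<alpha> / ((\<alpha> - 1) * (y/2)))"
    by (intro mult_left_mono sum_inverse_powers_above_le \<alpha>) (use y_pos in auto)
  also have "\<dots> = 2 * \<alpha> / (\<alpha> - 1) * y" using y_pos \<alpha> by (simp add: field_simps power2_eq_square)
  finally show ?thesis .
qed

locale iid_nonneg = prob_space +
  fixes X :: "nat \<Rightarrow> 'a \<Rightarrow> real"
  assumes X_measurable[measurable]: "\<And>i. X i \<in> borel_measurable M"
    and X_indep: "indep_vars (\<lambda>_. borel) X UNIV"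
    and X_distr: "\<And>i. distr M borel (X i) = distr M borel (X 0)"
    and X_nonneg: "\<And>i x. 0 \<le> X i x"
    and X_integrable: "integrable M (X 0)"
begin

lemma expectation_comp_X:
  fixes h :: "real \<Rightarrow> real"
  assumes [measurable]: "h \<in> borel_measurable borel"
  shows "expectation (\<lambda>x. h (X i x)) = expectation (\<lambda>x. h (X 0 x))"
  using integral_distr[of "X i" M borel h] integral_distr[of "X 0" M borel h] X_distr[of i]
  by simp

lemma AE_eventually_le_Suc_index: "AE x in M. eventually (\<lambda>n. X n x \<le> real (Suc n)) sequentially"
proof -
  define A where "A n = {x\<in>space M. real (Suc n) < X n x}" for n
  have A_sets: "A n \<in> sets M" for n unfolding A_def by measurable
  have prob_A: "prob (A n) = expectation (\<lambda>x. indicator {real (Suc n)<..} (X 0 x))" for n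
  proof -
    have "prob (A n) = expectation (indicator (A n))"
      using sets.sets_into_space[OF A_sets[of n]] by (simp add: Int_absorb2)
    also have "\<dots> = expectation (\<lambda>x. indicator {real (Suc n)<..} (X n x))"
      by (rule Bochner_Integration.integral_cong) (auto simp: A_def indicator_def)
    also have "\<dots> = expectation (\<lambda>x. indicator {real (Suc n)<..} (X 0 x))"
      by (rule expectation_comp_X) simp
    finally show ?thesis .
  qed
  have "summable (\<lambda>n. prob (A n))"
  proof (rule summableI_nonneg_bounded)
    fix N
    have "(\<Sum>n<N. prob (A n)) = expectation (\<lambda>x. \<Sum>n<N. indicator {real (Suc n)<..} (X 0 x))"
      unfolding prob_A by (rule Bochner_Integration.integral_sum[symmetric])
         (auto intro!: integrable_const_bound[where B=1])
    also have "\<dots> \<le> expectation (X 0)"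
      using X_integrable sum_indicator_Suc_less_le[OF X_nonneg]
      by (intro integral_mono Bochner_Integration.integrable_sum)
         (auto intro!: integrable_const_bound[where B=1])
    finally show "(\<Sum>n<N. prob (A n)) \<le> expectation (X 0)" .
  qed simp
  then have "AE x in M. eventually (\<lambda>n. x \<in> space M - A n) sequentially"
    by (intro borel_cantelli_AE1 A_sets) (simp_all add: emeasure_eq_measure)
  then show ?thesis
    by eventually_elim (auto elim!: eventually_mono simp: A_def not_less)
qed

definition trunc :: "nat \<Rightarrow> 'a \<Rightarrow> real" where
  "trunc i x = (if X i x \<le> real (Suc i) then X i x else 0)"

definition trunc_sum :: "nat \<Rightarrow> 'a \<Rightarrow> real" where
  "trunc_sum n x = (\<Sum>i<n. trunc i x)"

lemma trunc_measurable[measurable]: "trunc i \<in> borel_measurable M"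
  unfolding trunc_def by measurable

lemma trunc_sum_measurable[measurable]: "trunc_sum n \<in> borel_measurable M"
  unfolding trunc_sum_def by measurable

lemma trunc_bounds: "0 \<le> trunc i x" "trunc i x \<le> real (Suc i)"
  unfolding trunc_def using X_nonneg[of i x] by auto

lemma integrable_trunc: "integrable M (trunc i)"
  by (rule integrable_const_bound[where B="real (Suc i)"]) (use trunc_bounds in auto)

lemma trunc_indep: "indep_vars (\<lambda>_. borel) trunc UNIV"
proof -
  have "indep_vars (\<lambda>_. borel) (\<lambda>i x. (\<lambda>y. if y \<le> real (Suc i) then y else 0) (X i x)) UNIV"
    by (rule indep_vars_compose2[OF X_indep]) measurable
  then show ?thesis unfolding trunc_def[abs_def] .
qed

lemma integrable_truncated_square: "integrable M (\<lambda>x. truncated_square k (X 0 x))"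
  by (rule integrable_const_bound[where B="(real k)^2"])
     (use X_nonneg in \<open>auto simp: truncated_square_def intro!: power_mono\<close>)

lemma prob_trunc_sum_deviation_le:
  assumes e: "e > 0" and k: "k \<ge> 1"
  shows "prob {x\<in>space M. e * real k \<le> \<bar>trunc_sum k x - expectation (trunc_sum k)\<bar>}
          \<le> expectation (\<lambda>x. truncated_square k (X 0 x)) / (e^2 * real k)"
proof -
  have "(trunc_sum k x)^2 \<le> (real k * real k)^2" for x
  proof -
    have "trunc_sum k x \<le> (\<Sum>i<k. real k)" unfolding trunc_sum_def
      by (intro sum_mono) (metis trunc_bounds(2) Suc_leI lessThan_iff of_nat_le_iff order_trans)
    moreover have "0 \<le> trunc_sum k x" unfolding trunc_sum_def by (intro sum_nonneg) (simp add: trunc_bounds)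
    ultimately show ?thesis by (intro power_mono) auto
  qed
  then have int_sq: "integrable M (\<lambda>x. (trunc_sum k x)^2)"
    by (intro integrable_const_bound[where B="(real k * real k)^2"]) auto
  have second_moment: "expectation (\<lambda>x. (trunc i x)^2) \<le> expectation (\<lambda>x. truncated_square k (X 0 x))"
    if "i < k" for i
  proof -
    define h where "h y = (if y \<le> real (Suc i) then y else 0)^2" for y
    have "expectation (\<lambda>x. (trunc i x)^2) = expectation (\<lambda>x. h (X 0 x))"
      unfolding trunc_def h_def by (rule expectation_comp_X) measurable
    also have "\<dots> \<le> expectation (\<lambda>x. truncated_square k (X 0 x))"
    proof (rule integral_mono[OF _ integrable_truncated_square])
      show "integrable M (\<lambda>x. h (X 0 x))"
        by (rule integrable_const_bound[where B="(real (Suc i))^2"])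
           (use X_nonneg in \<open>auto simp: h_def intro!: power_mono\<close>)
      show "h (X 0 x) \<le> truncated_square k (X 0 x)" for x
        using that X_nonneg[of 0 x] by (auto simp: h_def truncated_square_def)
    qed
    finally show ?thesis .
  qed
  have "variance (trunc_sum k) = (\<Sum>i<k. variance (trunc i))"
    unfolding trunc_sum_def[abs_def]
    by (rule variance_sum_indep[OF _ trunc_indep, of "\<lambda>i. real (Suc i)"]) (use trunc_bounds in auto)
  also have "\<dots> \<le> (\<Sum>i<k. expectation (\<lambda>x. truncated_square k (X 0 x)))"
  proof (intro sum_mono order_trans[OF variance_le_second_moment second_moment])
    show "integrable M (\<lambda>x. (trunc i x)^2)" for i
      by (rule integrable_const_bound[where B="(real (Suc i))^2"])
         (use trunc_bounds in \<open>auto intro!: power_mono\<close>)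
  qed (auto simp: integrable_trunc)
  finally have variance_le: "variance (trunc_sum k) \<le> real k * expectation (\<lambda>x. truncated_square k (X 0 x))"
    by simp
  have "e * real k > 0" using e k by simp
  then have "prob {x\<in>space M. e * real k \<le> \<bar>trunc_sum k x - expectation (trunc_sum k)\<bar>}
      \<le> variance (trunc_sum k) / (e * real k)^2"
    using Chebyshev_inequality[OF trunc_sum_measurable int_sq] by simp
  also have "\<dots> \<le> real k * expectation (\<lambda>x. truncated_square k (X 0 x)) / (e * real k)^2"
    using variance_le by (rule divide_right_mono) simp
  also have "\<dots> = expectation (\<lambda>x. truncated_square k (X 0 x)) / (e^2 * real k)"
    using \<open>e * real k > 0\<close> by (simp add: power2_eq_square field_simps)
  finally show ?thesis .
qed

lemma summable_prob_trunc_sum_deviation_grid: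
  assumes \<alpha>: "\<alpha> > 1" and e: "e > 0"
  defines "k \<equiv> geometric_grid \<alpha>"
  shows "summable (\<lambda>m. prob {x\<in>space M. e * real (k m) \<le> \<bar>trunc_sum (k m) x - expectation (trunc_sum (k m))\<bar>})"
proof (rule summable_comparison_test')
  define c where "c m = expectation (\<lambda>x. truncated_square (k m) (X 0 x)) / (e^2 * real (k m))" for m
  show "norm (prob {x\<in>space M. e * real (k m) \<le> \<bar>trunc_sum (k m) x - expectation (trunc_sum (k m))\<bar>}) \<le> c m"
    for m using prob_trunc_sum_deviation_le[OF e geometric_grid_bounds(3)[OF \<alpha>]]
    by (simp add: c_def k_def)
  have c_nonneg: "0 \<le> c m" for m
    unfolding c_def by (intro divide_nonneg_nonneg integral_nonneg) (auto simp: truncated_square_def)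
  show "summable c"
  proof (rule summableI_nonneg_bounded[OF c_nonneg])
    fix N
    have "(\<Sum>m<N. c m) = expectation (\<lambda>x. (\<Sum>m<N. truncated_square (k m) (X 0 x) / real (k m)) / e^2)"
      unfolding c_def using integrable_truncated_square
      by (simp add: sum_divide_distrib[symmetric] mult.commute flip: divide_divide_eq_left)
    also have "\<dots> \<le> expectation (\<lambda>x. 2 * \<alpha> / (\<alpha> - 1) * X 0 x / e^2)"
      using sum_truncated_square_grid_le[OF \<alpha> X_nonneg] X_integrable integrable_truncated_square
      by (intro integral_mono divide_right_mono) (auto simp: k_def)
    finally show "(\<Sum>m<N. c m) \<le> expectation (\<lambda>x. 2 * \<alpha> / (\<alpha> - 1) * X 0 x / e^2)" .
  qed
qed

lemma AE_trunc_sum_deviation_grid: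
  assumes \<alpha>: "\<alpha> > 1"
  defines "k \<equiv> geometric_grid \<alpha>"
  shows "AE x in M. (\<lambda>m. (trunc_sum (k m) x - expectation (trunc_sum (k m))) / real (k m)) \<longlonglongrightarrow> 0"
proof -
  have k_pos: "real (k m) > 0" for m
    using geometric_grid_bounds(3)[OF \<alpha>, of m] by (simp add: k_def Suc_le_eq)
  have small: "AE x in M. eventually (\<lambda>m.
      \<bar>(trunc_sum (k m) x - expectation (trunc_sum (k m))) / real (k m)\<bar> < e) sequentially"
    if e: "e > 0" for e
  proof -
    define B where "B m = {x\<in>space M. e * real (k m) \<le> \<bar>trunc_sum (k m) x - expectation (trunc_sum (k m))\<bar>}" for m
    have "B m \<in> sets M" for m unfolding B_def by measurable
    then have "AE x in M. eventually (\<lambda>m. x \<in> space M - B m) sequentially"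
      using summable_prob_trunc_sum_deviation_grid[OF \<alpha> e]
      by (intro borel_cantelli_AE1) (simp_all add: B_def k_def emeasure_eq_measure)
    then show ?thesis
      by eventually_elim
         (auto elim!: eventually_mono simp: B_def not_le abs_div pos_divide_less_eq[OF k_pos] mult.commute)
  qed
  have "AE x in M. \<forall>j. eventually (\<lambda>m.
      \<bar>(trunc_sum (k m) x - expectation (trunc_sum (k m))) / real (k m)\<bar> < 1 / real (Suc j)) sequentially"
    unfolding AE_all_countable by (intro allI small) simp
  then show ?thesis
  proof eventually_elim
    case (elim x)
    show ?case
    proof (rule tendstoI)
      fix r :: real assume "r > 0"
      then obtain j where j: "1 / real (Suc j) < r" by (metis nat_approx_posE)
      from elim[rule_format, of j]
      show "\<forall>\<^sub>F m in sequentially. dist ((trunc_sum (k m) x - expectation (trunc_sum (k m))) / real (k m)) 0 < r"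
        by (elim eventually_mono) (use j in \<open>simp only: dist_real_def diff_zero\<close>)
    qed
  qed
qed

lemma expectation_trunc_sum_average: "(\<lambda>n. expectation (trunc_sum n) / real n) \<longlonglongrightarrow> expectation (X 0)"
proof -
  define h where "h i y = (if y \<le> real (Suc i) then y else 0)" for i y
  have "expectation (trunc i) = expectation (\<lambda>x. h i (X 0 x))" for i
    unfolding trunc_def h_def by (rule expectation_comp_X) measurable
  moreover have "(\<lambda>i. expectation (\<lambda>x. h i (X 0 x))) \<longlonglongrightarrow> expectation (X 0)"
  proof (rule integral_dominated_convergence[where w="X 0"])
    show "AE x in M. (\<lambda>i. h i (X 0 x)) \<longlonglongrightarrow> X 0 x"
    proof (intro AE_I2 tendsto_eventually)
      fix x
      obtain n :: nat where "X 0 x \<le> real n" using real_arch_simple by blast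
      then show "\<forall>\<^sub>F i in sequentially. h i (X 0 x) = X 0 x"
        unfolding eventually_sequentially h_def by (intro exI[of _ n]) auto
    qed
    show "AE x in M. norm (h i (X 0 x)) \<le> X 0 x" for i
      using X_nonneg by (auto simp: h_def)
  qed (use X_integrable in \<open>auto simp: h_def\<close>)
  ultimately have "(\<lambda>n. (\<Sum>i<n. expectation (trunc i)) / real n) \<longlonglongrightarrow> expectation (X 0)"
    by (simp add: cesaro_mean_tendsto)
  moreover have "expectation (trunc_sum n) = (\<Sum>i<n. expectation (trunc i))" for n
    unfolding trunc_sum_def[abs_def] by (rule Bochner_Integration.integral_sum) (rule integrable_trunc)
  ultimately show ?thesis by simp
qed

lemma AE_truncation_error_average: "AE x in M. (\<lambda>n. (\<Sum>i<n. X i x - trunc i x) / real n) \<longlonglongrightarrow> 0"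
  using AE_eventually_le_Suc_index
proof eventually_elim
  case (elim x)
  then have "\<forall>\<^sub>F i in sequentially. X i x - trunc i x = 0"
    by eventually_elim (simp add: trunc_def)
  then show ?case by (intro cesaro_mean_tendsto_zero tendsto_eventually)
qed

lemma AE_average_grid:
  assumes \<alpha>: "\<alpha> > 1"
  defines "k \<equiv> geometric_grid \<alpha>"
  shows "AE x in M. (\<lambda>m. (\<Sum>i<k m. X i x) / real (k m)) \<longlonglongrightarrow> expectation (X 0)"
  using AE_truncation_error_average AE_trunc_sum_deviation_grid[OF \<alpha>]
proof eventually_elim
  case (elim x)
  have k: "filterlim k at_top sequentially" unfolding k_def by (rule filterlim_geometric_grid[OF \<alpha>])
  have "(\<lambda>m. (\<Sum>i<k m. X i x - trunc i x) / real (k m)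
      + (trunc_sum (k m) x - expectation (trunc_sum (k m))) / real (k m)
      + expectation (trunc_sum (k m)) / real (k m)) \<longlonglongrightarrow> 0 + 0 + expectation (X 0)"
    using filterlim_compose[OF elim(1) k] elim(2)
      filterlim_compose[OF expectation_trunc_sum_average k]
    by (intro tendsto_add) (simp_all add: k_def comp_def)
  moreover have "(\<Sum>i<k m. X i x - trunc i x) / real (k m)
      + (trunc_sum (k m) x - expectation (trunc_sum (k m))) / real (k m)
      + expectation (trunc_sum (k m)) / real (k m) = (\<Sum>i<k m. X i x) / real (k m)" for m
    by (simp add: trunc_sum_def sum_subtractf diff_divide_distrib add_divide_distrib)
  ultimately show ?case by simp
qed

theorem AE_average_tendsto_expectation:
  "AE x in M. (\<lambda>n. (\<Sum>i<n. X i x) / real n) \<longlonglongrightarrow> expectation (X 0)"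
proof -
  define E where "E = expectation (X 0)"
  have E_nonneg: "E \<ge> 0" unfolding E_def using X_nonneg by (simp add: integral_nonneg)
  define \<alpha> where "\<alpha> j = 1 + 1 / real (Suc j)" for j
  have \<alpha>: "\<alpha> j > 1" for j unfolding \<alpha>_def by simp
  have "AE x in M. \<forall>j. (\<lambda>m. (\<Sum>i<geometric_grid (\<alpha> j) m. X i x) / real (geometric_grid (\<alpha> j) m)) \<longlonglongrightarrow> E"
    unfolding AE_all_countable E_def using AE_average_grid[OF \<alpha>] by blast
  then show ?thesis unfolding E_def[symmetric]
  proof eventually_elim
    case (elim x)
    show ?case
    proof (rule tendstoI)
      fix r :: real assume r: "r > 0"
      obtain j :: nat where "real j > 2 * E / r" using reals_Archimedean2 by blast
      then have j: "E / real (Suc j) < r / 2" using r by (simp add: field_simps)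
      have bounds: "E / \<alpha> j \<ge> E - E / real (Suc j)" "\<alpha> j * E = E + E / real (Suc j)"
        using E_nonneg by (simp_all add: \<alpha>_def field_simps)
      have "\<forall>\<^sub>F n in sequentially. E / \<alpha> j - r / 2 < (\<Sum>i<n. X i x) / real n \<and>
          (\<Sum>i<n. X i x) / real n < \<alpha> j * E + r / 2"
        using \<alpha>[of j] elim r X_nonneg
        by (intro eventually_average_between[where k="geometric_grid (\<alpha> j)"]
            geometric_grid_ratio filterlim_geometric_grid geometric_grid_bounds monoI sum_mono2)
           (auto intro: sum_nonneg)
      then show "\<forall>\<^sub>F n in sequentially. dist ((\<Sum>i<n. X i x) / real n) E < r"
      proof (rule eventually_mono)
        fix n
        assume "E / \<alpha> j - r / 2 < (\<Sum>i<n. X i x) / real n \<and> (\<Sum>i<n. X i x) / real n < \<alpha> j * E + r / 2"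
        then show "dist ((\<Sum>i<n. X i x) / real n) E < r"
          unfolding dist_real_def abs_less_iff using bounds j by linarith
      qed
    qed
  qed
qed

end

context prob_space
begin

lemma AE_average_tendsto_integral_nonneg:
  fixes Z :: "nat \<Rightarrow> 'a \<Rightarrow> 'z" and h :: "'z \<Rightarrow> real"
  assumes Z_measurable: "\<And>i. Z i \<in> measurable M N"
    and Z_indep: "indep_vars (\<lambda>_. N) Z UNIV"
    and Z_distr: "\<And>i. distr M N (Z i) = P"
    and h: "h \<in> borel_measurable N" "integrable P h" "\<And>z. 0 \<le> h z"
  shows "AE \<omega> in M. (\<lambda>n. (\<Sum>i<n. h (Z i \<omega>)) / real n) \<longlonglongrightarrow> integral\<^sup>L P h"
proof -
  interpret iid_nonneg M "\<lambda>i \<omega>. h (Z i \<omega>)"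
  proof
    show "(\<lambda>\<omega>. h (Z i \<omega>)) \<in> borel_measurable M" for i using Z_measurable h(1) by measurable
    show "indep_vars (\<lambda>_. borel) (\<lambda>i \<omega>. h (Z i \<omega>)) UNIV"
      by (rule indep_vars_compose2[OF Z_indep]) (use h(1) in simp)
    show "distr M borel (\<lambda>\<omega>. h (Z i \<omega>)) = distr M borel (\<lambda>\<omega>. h (Z 0 \<omega>))" for i
      using distr_distr[OF h(1) Z_measurable, of i] distr_distr[OF h(1) Z_measurable, of 0]
      by (simp add: Z_distr comp_def)
    show "integrable M (\<lambda>\<omega>. h (Z 0 \<omega>))"
      using h(2) integrable_distr_eq[OF Z_measurable h(1)] by (simp add: Z_distr)
  qed (use h(3) in simp)
  have "integral\<^sup>L P h = expectation (\<lambda>\<omega>. h (Z 0 \<omega>))"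
    using integral_distr[OF Z_measurable h(1)] by (simp add: Z_distr)
  then show ?thesis using AE_average_tendsto_expectation by simp
qed

theorem AE_average_tendsto_integral:
  fixes Z :: "nat \<Rightarrow> 'a \<Rightarrow> 'z" and g :: "'z \<Rightarrow> real"
  assumes Z_measurable: "\<And>i. Z i \<in> measurable M N"
    and Z_indep: "indep_vars (\<lambda>_. N) Z UNIV"
    and Z_distr: "\<And>i. distr M N (Z i) = P"
    and g: "g \<in> borel_measurable N" "integrable P g"
  shows "AE \<omega> in M. (\<lambda>n. (\<Sum>i<n. g (Z i \<omega>)) / real n) \<longlonglongrightarrow> integral\<^sup>L P g"
proof -
  have "integral\<^sup>L P g = integral\<^sup>L P (\<lambda>z. max 0 (g z)) - integral\<^sup>L P (\<lambda>z. max 0 (- g z))"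
  proof -
    have "integral\<^sup>L P g = integral\<^sup>L P (\<lambda>z. max 0 (g z) - max 0 (- g z))"
      by (rule Bochner_Integration.integral_cong) auto
    also have "\<dots> = integral\<^sup>L P (\<lambda>z. max 0 (g z)) - integral\<^sup>L P (\<lambda>z. max 0 (- g z))"
      using g(2) by (intro Bochner_Integration.integral_diff) auto
    finally show ?thesis .
  qed
  moreover have "(\<Sum>i<n. g (Z i \<omega>)) / real n =
      (\<Sum>i<n. max 0 (g (Z i \<omega>))) / real n - (\<Sum>i<n. max 0 (- g (Z i \<omega>))) / real n" for n \<omega>
  proof -
    have "(\<Sum>i<n. g (Z i \<omega>)) = (\<Sum>i<n. max 0 (g (Z i \<omega>)) - max 0 (- g (Z i \<omega>)))"
      by (intro sum.cong) auto
    then show ?thesis by (simp add: diff_divide_distrib[symmetric] sum_subtractf)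
  qed
  moreover
  have "AE \<omega> in M. (\<lambda>n. (\<Sum>i<n. max 0 (g (Z i \<omega>))) / real n) \<longlonglongrightarrow> integral\<^sup>L P (\<lambda>z. max 0 (g z))"
    and "AE \<omega> in M. (\<lambda>n. (\<Sum>i<n. max 0 (- g (Z i \<omega>))) / real n) \<longlonglongrightarrow> integral\<^sup>L P (\<lambda>z. max 0 (- g z))"
    using g by (intro AE_average_tendsto_integral_nonneg[OF Z_measurable Z_indep Z_distr]; auto)+
  then have "AE \<omega> in M.
      (\<lambda>n. (\<Sum>i<n. max 0 (g (Z i \<omega>))) / real n - (\<Sum>i<n. max 0 (- g (Z i \<omega>))) / real n)
      \<longlonglongrightarrow> integral\<^sup>L P (\<lambda>z. max 0 (g z)) - integral\<^sup>L P (\<lambda>z. max 0 (- g z))"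
    by eventually_elim (rule tendsto_diff)
  ultimately show ?thesis by simp
qed

end

section \<open>Relative entropy between densities\<close>

lemma ereal_integral_eq_nn_integral_diff:
  fixes f :: "'a \<Rightarrow> real"
  assumes "integrable P f"
  shows "ereal (integral\<^sup>L P f) =
    enn2ereal (\<integral>\<^sup>+x. ennreal (f x) \<partial>P) - enn2ereal (\<integral>\<^sup>+x. ennreal (- f x) \<partial>P)"
proof -
  have finite: "(\<integral>\<^sup>+x. ennreal (f x) \<partial>P) \<noteq> \<infinity>" "(\<integral>\<^sup>+x. ennreal (- f x) \<partial>P) \<noteq> \<infinity>"
    using assms unfolding real_integrable_def by auto
  have "enn2ereal a = ereal (enn2real a)" if "a \<noteq> \<infinity>" for a
    using that by (metis enn2real_nonneg enn2ereal_ennreal ennreal_enn2real infinity_ennreal_def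
        top.not_eq_extremum)
  with finite show ?thesis by (simp add: real_lebesgue_integral_def[OF assms])
qed

lemma rel_entropy_density:
  fixes \<mu> :: "'z measure" and f g :: "'z \<Rightarrow> real"
  assumes f: "f \<in> borel_measurable \<mu>" and g: "g \<in> borel_measurable \<mu>"
    and prob_f: "prob_space (density \<mu> (\<lambda>z. ennreal (exp (f z))))"
    and int: "integrable (density \<mu> (\<lambda>z. ennreal (exp (g z)))) (\<lambda>z. g z - f z)"
  shows "rel_entropy (density \<mu> (\<lambda>z. ennreal (exp (g z)))) (density \<mu> (\<lambda>z. ennreal (exp (f z))))
       = ereal (\<integral>z. g z - f z \<partial>density \<mu> (\<lambda>z. ennreal (exp (g z))))"
proof -
  define Pf where "Pf = density \<mu> (\<lambda>z. ennreal (exp (f z)))"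
  define Pg where "Pg = density \<mu> (\<lambda>z. ennreal (exp (g z)))"
  define h where "h z = ennreal (exp (g z - f z))" for z
  have h_measurable: "h \<in> borel_measurable Pf" unfolding h_def Pf_def using f g by simp
  have "density Pf h = density \<mu> (\<lambda>z. ennreal (exp (f z)) * h z)"
    unfolding Pf_def by (rule density_density_eq) (use f g in \<open>auto simp: h_def[abs_def]\<close>)
  also have "(\<lambda>z. ennreal (exp (f z)) * h z) = (\<lambda>z. ennreal (exp (g z)))"
    by (auto simp: h_def ennreal_mult[symmetric] exp_add[symmetric])
  finally have Pg_eq: "Pg = density Pf h" unfolding Pg_def by simp
  interpret Pf: prob_space Pf unfolding Pf_def by (rule prob_f)
  have "AE x in Pf. h x = RN_deriv Pf Pg x"
    by (rule Pf.RN_deriv_unique[OF h_measurable Pg_eq[symmetric]])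
  then have "AE x in Pg. h x = RN_deriv Pf Pg x"
    unfolding Pg_eq using h_measurable by (subst AE_density) (auto elim: AE_mp)
  then have log_RN: "AE x in Pg. ln (enn2real (RN_deriv Pf Pg x)) = g x - f x"
    by eventually_elim (metis h_def enn2real_ennreal exp_ge_zero ln_exp)
  have "(\<integral>\<^sup>+x. ennreal (ln (enn2real (RN_deriv Pf Pg x))) \<partial>Pg) = (\<integral>\<^sup>+x. ennreal (g x - f x) \<partial>Pg)"
    "(\<integral>\<^sup>+x. ennreal (- ln (enn2real (RN_deriv Pf Pg x))) \<partial>Pg) = (\<integral>\<^sup>+x. ennreal (- (g x - f x)) \<partial>Pg)"
    by (rule nn_integral_cong_AE, use log_RN in eventually_elim, simp)+
  moreover have "absolutely_continuous Pf Pg"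
    unfolding Pg_eq by (rule absolutely_continuousI_density[OF h_measurable])
  moreover have "sets Pg = sets Pf" unfolding Pg_def Pf_def by simp
  ultimately have "rel_entropy Pg Pf =
      enn2ereal (\<integral>\<^sup>+x. ennreal (g x - f x) \<partial>Pg) - enn2ereal (\<integral>\<^sup>+x. ennreal (- (g x - f x)) \<partial>Pg)"
    unfolding rel_entropy_def Let_def by simp
  also have "\<dots> = ereal (\<integral>z. g z - f z \<partial>Pg)"
    by (rule ereal_integral_eq_nn_integral_diff[symmetric]) (use int in \<open>simp add: Pg_def\<close>)
  finally show ?thesis unfolding Pg_def Pf_def .
qed

lemma rel_entropy_set_density_image:
  fixes \<mu> :: "'z measure" and g :: "'z \<Rightarrow> real" and f :: "'t \<Rightarrow> 'z \<Rightarrow> real"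
  assumes "g \<in> borel_measurable \<mu>"
    and "\<And>\<theta>. \<theta> \<in> S \<Longrightarrow> f \<theta> \<in> borel_measurable \<mu> \<and> prob_space (density \<mu> (\<lambda>z. ennreal (exp (f \<theta> z))))"
    and "\<And>\<theta>. \<theta> \<in> S \<Longrightarrow> integrable (density \<mu> (\<lambda>z. ennreal (exp (g z)))) (\<lambda>z. g z - f \<theta> z)"
  shows "rel_entropy_set (density \<mu> (\<lambda>z. ennreal (exp (g z)))) ((\<lambda>\<theta>. density \<mu> (\<lambda>z. ennreal (exp (f \<theta> z)))) ` S)
    = (INF \<theta>\<in>S. ereal (\<integral>z. g z - f \<theta> z \<partial>density \<mu> (\<lambda>z. ennreal (exp (g z)))))"
  unfolding rel_entropy_set_def image_image
proof (rule INF_cong[OF refl])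
  fix \<theta> assume "\<theta> \<in> S"
  with assms show "rel_entropy (density \<mu> (\<lambda>z. ennreal (exp (g z)))) (density \<mu> (\<lambda>z. ennreal (exp (f \<theta> z))))
      = ereal (\<integral>z. g z - f \<theta> z \<partial>density \<mu> (\<lambda>z. ennreal (exp (g z))))"
    by (intro rel_entropy_density) auto
qed

lemma density_notin_if_rel_entropy_set_pos:
  fixes \<mu> :: "'z measure" and g :: "'z \<Rightarrow> real"
  assumes "g \<in> borel_measurable \<mu>" "prob_space (density \<mu> (\<lambda>z. ennreal (exp (g z))))"
    and "0 < rel_entropy_set (density \<mu> (\<lambda>z. ennreal (exp (g z)))) Q"
  shows "density \<mu> (\<lambda>z. ennreal (exp (g z))) \<notin> Q"
proof
  assume "density \<mu> (\<lambda>z. ennreal (exp (g z))) \<in> Q"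
  then have "rel_entropy_set (density \<mu> (\<lambda>z. ennreal (exp (g z)))) Q
      \<le> rel_entropy (density \<mu> (\<lambda>z. ennreal (exp (g z)))) (density \<mu> (\<lambda>z. ennreal (exp (g z))))"
    unfolding rel_entropy_set_def by (rule INF_lower)
  also have "\<dots> = 0" using rel_entropy_density[OF assms(1,1,2)] by simp
  finally show False using assms(3) by simp
qed

lemma INF_ereal_gap_witness:
  fixes h :: "'t \<Rightarrow> real"
  assumes "(INF \<theta>\<in>A. ereal (h \<theta>)) < (INF \<theta>\<in>B. ereal (h \<theta>))"
  obtains \<theta>1 a where "\<theta>1 \<in> A" "a > 0" "\<And>\<theta>. \<theta> \<in> B \<Longrightarrow> a < h \<theta> - h \<theta>1"
proof -
  obtain \<theta>1 where "\<theta>1 \<in> A" and "ereal (h \<theta>1) < (INF \<theta>\<in>B. ereal (h \<theta>))"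
    using assms by (auto simp: INF_less_iff)
  then obtain r where r: "ereal (h \<theta>1) < ereal r" "ereal r < (INF \<theta>\<in>B. ereal (h \<theta>))"
    by (meson ereal_dense2)
  have "r < h \<theta>" if "\<theta> \<in> B" for \<theta>
    using order.strict_trans2[OF r(2) INF_lower[OF that]] by simp
  then show ?thesis using r(1) \<open>\<theta>1 \<in> A\<close> by (intro that[of \<theta>1 "r - h \<theta>1"]) auto
qed

lemma integrable_diff_between:
  fixes l u f g :: "'z \<Rightarrow> real"
  assumes "integrable P (\<lambda>z. u z - l z)"
    and "f \<in> borel_measurable P" "g \<in> borel_measurable P"
    and "\<And>z. l z \<le> f z \<and> f z \<le> u z" "\<And>z. l z \<le> g z \<and> g z \<le> u z"
  shows "integrable P (\<lambda>z. f z - g z)"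
proof (rule Bochner_Integration.integrable_bound[OF assms(1)])
  show "AE z in P. norm (f z - g z) \<le> norm (u z - l z)"
    using assms(4,5) by (intro AE_I2) (smt (verit) real_norm_def)
qed (use assms(2,3) in simp)

section \<open>Local suprema of a continuous family\<close>

lemma compact_countable_dense_subset:
  fixes S :: "'t::metric_space set"
  assumes "compact S"
  obtains D where "countable D" "D \<subseteq> S" "\<And>x e. x \<in> S \<Longrightarrow> e > 0 \<Longrightarrow> \<exists>d\<in>D. dist d x < e"
proof -
  have "\<exists>F. finite F \<and> F \<subseteq> S \<and> S \<subseteq> (\<Union>x\<in>F. ball x (1 / real (Suc j)))" for j
  proof -
    have "S \<subseteq> (\<Union>x\<in>S. ball x (1 / real (Suc j)))" by force
    from compactE_image[OF assms _ this] show ?thesis by (metis open_ball)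
  qed
  then obtain F where F: "\<And>j. finite (F j) \<and> F j \<subseteq> S \<and> S \<subseteq> (\<Union>x\<in>F j. ball x (1 / real (Suc j)))"
    by metis
  show ?thesis
  proof
    show "countable (\<Union>j. F j)" using F by (intro countable_UN) (auto intro: countable_finite)
    show "(\<Union>j. F j) \<subseteq> S" using F by auto
    show "\<exists>d\<in>\<Union>j. F j. dist d x < e" if "x \<in> S" "e > 0" for x e
    proof -
      obtain j where j: "1 / real (Suc j) < e" using \<open>e > 0\<close> by (metis nat_approx_posE)
      from F[of j] \<open>x \<in> S\<close> obtain d where "d \<in> F j" "dist d x < 1 / real (Suc j)" by auto
      with j show ?thesis by (meson UN_I UNIV_I order.strict_trans)
    qed
  qed
qed

text \<open>Taking the supremum over a countable dense subset \<open>D\<close> of the parameter set makes the local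
  supremum measurable in \<open>z\<close>; by continuity it does not miss any parameter of the ball.\<close>

definition ball_sup :: "'t::metric_space set \<Rightarrow> ('t \<Rightarrow> 'z \<Rightarrow> real) \<Rightarrow> 't \<Rightarrow> real \<Rightarrow> 'z \<Rightarrow> real" where
  "ball_sup D f \<theta>0 \<delta> z = (SUP d\<in>D \<inter> ball \<theta>0 \<delta>. f d z)"

locale continuous_family_on_dense_subset =
  fixes S D :: "'t::metric_space set" and f :: "'t \<Rightarrow> 'z \<Rightarrow> real" and u :: "'z \<Rightarrow> real"
  assumes D_subset: "D \<subseteq> S" and D_dense: "\<And>x e. x \<in> S \<Longrightarrow> e > 0 \<Longrightarrow> \<exists>d\<in>D. dist d x < e"
    and f_continuous: "\<And>z. continuous_on S (\<lambda>\<theta>. f \<theta> z)"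
    and f_le: "\<And>\<theta> z. \<theta> \<in> S \<Longrightarrow> f \<theta> z \<le> u z"
begin

lemma dense_inter_ball_nonempty: "\<theta>0 \<in> S \<Longrightarrow> \<delta> > 0 \<Longrightarrow> D \<inter> ball \<theta>0 \<delta> \<noteq> {}"
  using D_dense by (fastforce simp: dist_commute)

lemma bdd_above_ball_values: "bdd_above ((\<lambda>d. f d z) ` (D \<inter> ball \<theta>0 \<delta>))"
  using D_subset f_le by (intro bdd_aboveI2[where M="u z"]) auto

lemma ball_sup_ge:
  assumes "\<theta> \<in> S" "dist \<theta>0 \<theta> < \<delta>"
  shows "f \<theta> z \<le> ball_sup D f \<theta>0 \<delta> z"
proof (rule field_le_epsilon)
  fix e :: real assume "e > 0"
  then obtain \<eta> where \<eta>: "\<eta> > 0" "\<And>\<theta>'. \<theta>' \<in> S \<Longrightarrow> dist \<theta>' \<theta> < \<eta> \<Longrightarrow> dist (f \<theta>' z) (f \<theta> z) < e"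
    using f_continuous assms(1) unfolding continuous_on_iff by metis
  obtain d where d: "d \<in> D" "dist d \<theta> < min \<eta> (\<delta> - dist \<theta>0 \<theta>)"
    using D_dense[OF assms(1)] \<eta>(1) assms(2) by (metis diff_gt_0_iff_gt min_less_iff_conj)
  then have "d \<in> ball \<theta>0 \<delta>" using dist_triangle2[of \<theta>0 d \<theta>] by simp
  then have "f d z \<le> ball_sup D f \<theta>0 \<delta> z"
    unfolding ball_sup_def using d(1) by (intro cSUP_upper bdd_above_ball_values) auto
  moreover have "dist (f d z) (f \<theta> z) < e" using \<eta>(2) d D_subset by auto
  ultimately show "f \<theta> z \<le> ball_sup D f \<theta>0 \<delta> z + e" by (simp add: dist_real_def abs_less_iff)
qed

lemma ball_sup_le: "\<theta>0 \<in> S \<Longrightarrow> \<delta> > 0 \<Longrightarrow> ball_sup D f \<theta>0 \<delta> z \<le> u z"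
  unfolding ball_sup_def using D_subset f_le by (intro cSUP_least dense_inter_ball_nonempty) auto

lemma ball_sup_between:
  assumes "\<theta>0 \<in> S" "\<delta> > 0" "\<And>\<theta>. \<theta> \<in> S \<Longrightarrow> l z \<le> f \<theta> z"
  shows "l z \<le> ball_sup D f \<theta>0 \<delta> z \<and> ball_sup D f \<theta>0 \<delta> z \<le> u z"
proof
  have "f \<theta>0 z \<le> ball_sup D f \<theta>0 \<delta> z" using assms by (intro ball_sup_ge) auto
  then show "l z \<le> ball_sup D f \<theta>0 \<delta> z" using assms(3)[OF assms(1)] by linarith
  show "ball_sup D f \<theta>0 \<delta> z \<le> u z" using assms by (intro ball_sup_le)
qed

lemma ball_sup_tendsto:
  assumes "\<theta>0 \<in> S"
  shows "(\<lambda>j. ball_sup D f \<theta>0 (1 / real (Suc j)) z) \<longlonglongrightarrow> f \<theta>0 z"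
proof (rule tendstoI)
  fix e :: real assume "e > 0"
  then obtain \<eta> where \<eta>: "\<eta> > 0" "\<And>\<theta>. \<theta> \<in> S \<Longrightarrow> dist \<theta> \<theta>0 < \<eta> \<Longrightarrow> dist (f \<theta> z) (f \<theta>0 z) < e / 2"
    using f_continuous assms unfolding continuous_on_iff by (metis half_gt_zero)
  obtain N where N: "1 / real (Suc N) < \<eta>" using \<eta>(1) by (metis nat_approx_posE)
  show "\<forall>\<^sub>F j in sequentially. dist (ball_sup D f \<theta>0 (1 / real (Suc j)) z) (f \<theta>0 z) < e"
    using eventually_ge_at_top[of N]
  proof eventually_elim
    case (elim j)
    define \<delta> where "\<delta> = 1 / real (Suc j)"
    have "\<delta> \<le> 1 / real (Suc N)" unfolding \<delta>_def using elim by (intro divide_left_mono) auto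
    then have \<delta>: "\<delta> > 0" "\<delta> < \<eta>" using N by (auto simp: \<delta>_def)
    have "f \<theta>0 z \<le> ball_sup D f \<theta>0 \<delta> z" using assms \<delta> by (intro ball_sup_ge) auto
    moreover have "ball_sup D f \<theta>0 \<delta> z \<le> f \<theta>0 z + e / 2"
      unfolding ball_sup_def
    proof (rule cSUP_least[OF dense_inter_ball_nonempty[OF assms \<delta>(1)]])
      fix d assume "d \<in> D \<inter> ball \<theta>0 \<delta>"
      then have "dist (f d z) (f \<theta>0 z) < e / 2" using D_subset \<delta> by (intro \<eta>(2)) (auto simp: dist_commute)
      then show "f d z \<le> f \<theta>0 z + e / 2" unfolding dist_real_def by linarith
    qed
    ultimately show ?case using \<open>e > 0\<close> by (simp add: \<delta>_def dist_real_def)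
  qed
qed

lemma borel_measurable_ball_sup:
  assumes "countable D" "\<And>\<theta>. \<theta> \<in> S \<Longrightarrow> f \<theta> \<in> borel_measurable N"
  shows "ball_sup D f \<theta>0 \<delta> \<in> borel_measurable N"
  unfolding ball_sup_def[abs_def] using assms D_subset
  by (intro borel_measurable_cSUP bdd_above_ball_values) (auto intro: countable_subset)

lemma ball_sup_integral_gap:
  assumes "countable D" and f_measurable: "\<And>\<theta>. \<theta> \<in> S \<Longrightarrow> f \<theta> \<in> borel_measurable P"
    and g_measurable: "g \<in> borel_measurable P"
    and l_le: "\<And>\<theta> z. \<theta> \<in> S \<Longrightarrow> l z \<le> f \<theta> z" and g_bounds: "\<And>z. l z \<le> g z \<and> g z \<le> u z"
    and integrable_u_l: "integrable P (\<lambda>z. u z - l z)"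
    and "\<theta>0 \<in> S" and gap: "a < (\<integral>z. g z - f \<theta>0 z \<partial>P)"
  shows "\<exists>\<delta>>0. a < (\<integral>z. g z - ball_sup D f \<theta>0 \<delta> z \<partial>P)"
proof -
  let ?\<delta> = "\<lambda>j. 1 / real (Suc j)"
  have "(\<lambda>j. \<integral>z. g z - ball_sup D f \<theta>0 (?\<delta> j) z \<partial>P) \<longlonglongrightarrow> (\<integral>z. g z - f \<theta>0 z \<partial>P)"
  proof (rule integral_dominated_convergence[OF _ _ integrable_u_l])
    show "AE z in P. (\<lambda>j. g z - ball_sup D f \<theta>0 (?\<delta> j) z) \<longlonglongrightarrow> g z - f \<theta>0 z"
      using \<open>\<theta>0 \<in> S\<close> by (intro AE_I2 tendsto_diff tendsto_const ball_sup_tendsto)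
    have "l z \<le> ball_sup D f \<theta>0 (?\<delta> j) z \<and> ball_sup D f \<theta>0 (?\<delta> j) z \<le> u z" for j z
      using \<open>\<theta>0 \<in> S\<close> l_le by (intro ball_sup_between) auto
    then show "AE z in P. norm (g z - ball_sup D f \<theta>0 (?\<delta> j) z) \<le> u z - l z" for j
      using g_bounds by (intro AE_I2) (smt (verit) real_norm_def)
    show "(\<lambda>z. g z - ball_sup D f \<theta>0 (?\<delta> j) z) \<in> borel_measurable P" for j
      using borel_measurable_ball_sup[OF \<open>countable D\<close> f_measurable] g_measurable
      by (rule borel_measurable_diff[rotated])
  qed (use f_measurable[OF \<open>\<theta>0 \<in> S\<close>] g_measurable in simp)
  from order_tendstoD(1)[OF this gap] obtain j where "a < (\<integral>z. g z - ball_sup D f \<theta>0 (?\<delta> j) z \<partial>P)"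
    by (auto dest: eventually_happens)
  then show ?thesis by (intro exI[of _ "?\<delta> j"]) auto
qed

end

section \<open>The criterion eventually increases from \<open>K\<close> to \<open>K + 1\<close>\<close>

lemma finite_minorants_of_gap:
  fixes f :: "'t::metric_space \<Rightarrow> 'z \<Rightarrow> real"
  assumes sets_P: "sets P = sets N"
    and "compact S" and f_continuous: "\<And>z. continuous_on S (\<lambda>\<theta>. f \<theta> z)"
    and f_measurable: "\<And>\<theta>. \<theta> \<in> S \<Longrightarrow> f \<theta> \<in> borel_measurable N"
    and g_measurable: "g \<in> borel_measurable N"
    and f_bounds: "\<And>\<theta> z. \<theta> \<in> S \<Longrightarrow> l z \<le> f \<theta> z \<and> f \<theta> z \<le> u z"
    and g_bounds: "\<And>z. l z \<le> g z \<and> g z \<le> u z"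
    and integrable_u_l: "integrable P (\<lambda>z. u z - l z)"
    and gap: "\<And>\<theta>. \<theta> \<in> S \<Longrightarrow> a < (\<integral>z. g z - f \<theta> z \<partial>P)"
  shows "\<exists>F :: 't set. \<exists>h. finite F \<and>
    (\<forall>\<theta>0\<in>F. h \<theta>0 \<in> borel_measurable N \<and> integrable P (h \<theta>0) \<and> a < (\<integral>z. h \<theta>0 z \<partial>P)) \<and>
    (\<forall>\<theta>\<in>S. \<exists>\<theta>0\<in>F. \<forall>z. h \<theta>0 z \<le> g z - f \<theta> z)"
proof -
  obtain D where "countable D" and D_subset: "D \<subseteq> S"
    and D_dense: "\<And>x e. x \<in> S \<Longrightarrow> e > 0 \<Longrightarrow> \<exists>d\<in>D. dist d x < e"
    using compact_countable_dense_subset[OF \<open>compact S\<close>] by metis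
  have f_le: "\<And>\<theta> z. \<theta> \<in> S \<Longrightarrow> f \<theta> z \<le> u z" using f_bounds by blast
  interpret family: continuous_family_on_dense_subset S D f u
    using D_subset D_dense f_continuous f_le by unfold_locales auto
  have measurable_P: "h \<in> borel_measurable P" if "h \<in> borel_measurable N" for h
    using that by (subst measurable_cong_sets[OF sets_P refl])
  have "\<exists>\<delta>>0. a < (\<integral>z. g z - ball_sup D f \<theta>0 \<delta> z \<partial>P)" if "\<theta>0 \<in> S" for \<theta>0
  proof (rule family.ball_sup_integral_gap[OF \<open>countable D\<close>])
    show "f \<theta> \<in> borel_measurable P" if "\<theta> \<in> S" for \<theta> using f_measurable[OF that] by (rule measurable_P)
    show "l z \<le> f \<theta> z" if "\<theta> \<in> S" for \<theta> z using f_bounds[OF that] by blast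
  qed (use g_measurable measurable_P g_bounds integrable_u_l that gap in auto)
  then obtain \<delta> where \<delta>: "\<And>\<theta>0. \<theta>0 \<in> S \<Longrightarrow> \<delta> \<theta>0 > 0 \<and> a < (\<integral>z. g z - ball_sup D f \<theta>0 (\<delta> \<theta>0) z \<partial>P)"
    by metis
  have "S \<subseteq> (\<Union>\<theta>0\<in>S. ball \<theta>0 (\<delta> \<theta>0))" using \<delta> by force
  from compactE_image[OF \<open>compact S\<close> _ this] obtain F
    where F: "F \<subseteq> S" "finite F" and F_cover: "S \<subseteq> (\<Union>\<theta>0\<in>F. ball \<theta>0 (\<delta> \<theta>0))"
    by auto
  define h where "h \<theta>0 z = g z - ball_sup D f \<theta>0 (\<delta> \<theta>0) z" for \<theta>0 z
  have "h \<theta>0 \<in> borel_measurable N \<and> integrable P (h \<theta>0) \<and> a < (\<integral>z. h \<theta>0 z \<partial>P)"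
    if "\<theta>0 \<in> F" for \<theta>0
  proof -
    have "\<theta>0 \<in> S" using F that by auto
    then have "l z \<le> ball_sup D f \<theta>0 (\<delta> \<theta>0) z \<and> ball_sup D f \<theta>0 (\<delta> \<theta>0) z \<le> u z" for z
      using \<delta> f_bounds by (intro family.ball_sup_between) auto
    moreover have "ball_sup D f \<theta>0 (\<delta> \<theta>0) \<in> borel_measurable N"
      by (rule family.borel_measurable_ball_sup[OF \<open>countable D\<close> f_measurable])
    ultimately show ?thesis
      using g_bounds g_measurable \<delta>[OF \<open>\<theta>0 \<in> S\<close>]
      unfolding h_def[abs_def]
      by (simp add: integrable_diff_between[OF integrable_u_l] measurable_P borel_measurable_diff)
  qed
  moreover have "\<exists>\<theta>0\<in>F. \<forall>z. h \<theta>0 z \<le> g z - f \<theta> z" if "\<theta> \<in> S" for \<theta>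
  proof -
    from F_cover that obtain \<theta>0 where "\<theta>0 \<in> F" "dist \<theta>0 \<theta> < \<delta> \<theta>0" by auto
    with that show ?thesis by (auto simp: h_def intro!: family.ball_sup_ge)
  qed
  ultimately show ?thesis using \<open>finite F\<close> by (intro exI[where x=F] exI[where x=h]) blast
qed

lemma (in prob_space) AE_eventually_uniform_sum_gap:
  fixes Z :: "nat \<Rightarrow> 'a \<Rightarrow> 'z" and f :: "'t::metric_space \<Rightarrow> 'z \<Rightarrow> real"
  assumes Z_measurable: "\<And>i. Z i \<in> measurable M N"
    and Z_indep: "indep_vars (\<lambda>_. N) Z UNIV"
    and Z_distr: "\<And>i. distr M N (Z i) = P"
    and compact: "compact S" and f_continuous: "\<And>z. continuous_on S (\<lambda>\<theta>. f \<theta> z)"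
    and f_measurable: "\<And>\<theta>. \<theta> \<in> S \<Longrightarrow> f \<theta> \<in> borel_measurable N"
    and g_measurable: "g \<in> borel_measurable N"
    and f_bounds: "\<And>\<theta> z. \<theta> \<in> S \<Longrightarrow> l z \<le> f \<theta> z \<and> f \<theta> z \<le> u z"
    and g_bounds: "\<And>z. l z \<le> g z \<and> g z \<le> u z"
    and integrable_u_l: "integrable P (\<lambda>z. u z - l z)"
    and gap: "\<And>\<theta>. \<theta> \<in> S \<Longrightarrow> a < (\<integral>z. g z - f \<theta> z \<partial>P)"
  shows "AE \<omega> in M. eventually (\<lambda>n. \<forall>\<theta>\<in>S.
    (\<Sum>i<n. f \<theta> (Z i \<omega>)) + a * real n < (\<Sum>i<n. g (Z i \<omega>))) sequentially"
proof -
  have sets_P: "sets P = sets N" using Z_distr[of 0] by auto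
  have "\<exists>F :: 't set. \<exists>h. finite F \<and>
      (\<forall>\<theta>0\<in>F. h \<theta>0 \<in> borel_measurable N \<and> integrable P (h \<theta>0) \<and> a < (\<integral>z. h \<theta>0 z \<partial>P)) \<and>
      (\<forall>\<theta>\<in>S. \<exists>\<theta>0\<in>F. \<forall>z. h \<theta>0 z \<le> g z - f \<theta> z)"
    by (rule finite_minorants_of_gap[where P=P and N=N and S=S and f=f and g=g and l=l and u=u and a=a,
        OF sets_P compact f_continuous f_measurable g_measurable f_bounds g_bounds integrable_u_l gap])
      assumption+
  then obtain F :: "'t set" and h where "finite F"
    and h: "\<And>\<theta>0. \<theta>0 \<in> F \<Longrightarrow> h \<theta>0 \<in> borel_measurable N \<and> integrable P (h \<theta>0) \<and> a < (\<integral>z. h \<theta>0 z \<partial>P)"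
    and minorant: "\<And>\<theta>. \<theta> \<in> S \<Longrightarrow> \<exists>\<theta>0\<in>F. \<forall>z. h \<theta>0 z \<le> g z - f \<theta> z"
    by blast
  have "AE \<omega> in M. \<forall>\<theta>0\<in>F. (\<lambda>n. (\<Sum>i<n. h \<theta>0 (Z i \<omega>)) / real n) \<longlonglongrightarrow> (\<integral>z. h \<theta>0 z \<partial>P)"
    using h by (intro AE_finite_allI[OF \<open>finite F\<close>] AE_average_tendsto_integral[OF Z_measurable Z_indep Z_distr])
      auto
  then show ?thesis
  proof eventually_elim
    case (elim \<omega>)
    have "eventually (\<lambda>n. \<forall>\<theta>0\<in>F. a < (\<Sum>i<n. h \<theta>0 (Z i \<omega>)) / real n) sequentially"
      using elim h by (intro eventually_ball_finite[OF \<open>finite F\<close>] ballI order_tendstoD(1)) auto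
    then show ?case using eventually_gt_at_top[of 0]
    proof eventually_elim
      case (elim n)
      show ?case
      proof
        fix \<theta> assume "\<theta> \<in> S"
        with minorant obtain \<theta>0 where "\<theta>0 \<in> F" and "\<forall>z. h \<theta>0 z \<le> g z - f \<theta> z" by blast
        then have "(\<Sum>i<n. h \<theta>0 (Z i \<omega>)) \<le> (\<Sum>i<n. g (Z i \<omega>)) - (\<Sum>i<n. f \<theta> (Z i \<omega>))"
          by (simp add: sum_subtractf[symmetric] sum_mono)
        moreover have "a * real n < (\<Sum>i<n. h \<theta>0 (Z i \<omega>))"
          using elim \<open>\<theta>0 \<in> F\<close> by (simp add: pos_less_divide_eq)
        ultimately show "(\<Sum>i<n. f \<theta> (Z i \<omega>)) + a * real n < (\<Sum>i<n. g (Z i \<omega>))" by simp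
      qed
    qed
  qed
qed

lemma (in prob_space) AE_eventually_crit_less_crit_Suc:
  fixes Z :: "nat \<Rightarrow> 'a \<Rightarrow> 'z" and \<Theta> :: "nat \<Rightarrow> 't::metric_space set"
  assumes Z_measurable: "\<And>i. Z i \<in> measurable M N"
    and Z_indep: "indep_vars (\<lambda>_. N) Z UNIV"
    and Z_distr: "\<And>i. distr M N (Z i) = P"
    and "compact (\<Theta> K)" and ell_continuous: "\<And>z. continuous_on (\<Theta> K) (\<lambda>\<theta>. ell \<theta> z)"
    and ell_measurable: "\<And>\<theta>. \<theta> \<in> insert \<theta>' (\<Theta> K) \<Longrightarrow> ell \<theta> \<in> borel_measurable N"
    and ell_bounds: "\<And>\<theta> z. \<theta> \<in> insert \<theta>' (\<Theta> K) \<Longrightarrow> l z \<le> ell \<theta> z \<and> ell \<theta> z \<le> u z"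
    and integrable_u_l: "integrable P (\<lambda>z. u z - l z)"
    and "\<theta>' \<in> \<Theta> (Suc K)" and "a > 0" and gap: "\<And>\<theta>. \<theta> \<in> \<Theta> K \<Longrightarrow> a < (\<integral>z. ell \<theta>' z - ell \<theta> z \<partial>P)"
    and pen_nonneg: "\<And>n. 0 \<le> pen n K"
    and pen_small: "(\<lambda>n. pen n (Suc K) / real n) \<longlonglongrightarrow> 0"
  shows "AE \<omega> in M. eventually (\<lambda>n. crit ell \<Theta> pen Z n K \<omega> < crit ell \<Theta> pen Z n (Suc K) \<omega>) sequentially"
proof -
  have "AE \<omega> in M. eventually (\<lambda>n. \<forall>\<theta>\<in>\<Theta> K.
      (\<Sum>i<n. ell \<theta> (Z i \<omega>)) + a * real n < (\<Sum>i<n. ell \<theta>' (Z i \<omega>))) sequentially"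
    by (rule AE_eventually_uniform_sum_gap[OF Z_measurable Z_indep Z_distr \<open>compact (\<Theta> K)\<close>
          ell_continuous _ _ _ _ integrable_u_l gap]) (use ell_measurable ell_bounds in auto)
  then show ?thesis
  proof (elim AE_mp, intro AE_I2 impI)
  fix \<omega>
  assume "eventually (\<lambda>n. \<forall>\<theta>\<in>\<Theta> K. (\<Sum>i<n. ell \<theta> (Z i \<omega>)) + a * real n < (\<Sum>i<n. ell \<theta>' (Z i \<omega>))) sequentially"
  moreover have "eventually (\<lambda>n. pen n (Suc K) / real n < a) sequentially"
    using order_tendstoD(2)[OF pen_small \<open>a > 0\<close>] .
  ultimately show "eventually (\<lambda>n. crit ell \<Theta> pen Z n K \<omega> < crit ell \<Theta> pen Z n (Suc K) \<omega>) sequentially"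
    using eventually_gt_at_top[of 0]
  proof eventually_elim
    case (elim n)
    define L1 where "L1 = (\<Sum>i<n. ell \<theta>' (Z i \<omega>))"
    have "(SUP \<theta>\<in>\<Theta> K. ereal (\<Sum>i<n. ell \<theta> (Z i \<omega>))) \<le> ereal (L1 - a * real n)"
      using elim(1) by (intro SUP_least) (auto simp: L1_def)
    then have "crit ell \<Theta> pen Z n K \<omega> \<le> ereal (L1 - a * real n - pen n K)"
      unfolding crit_def by (metis ereal_minus(1) ereal_minus_mono order_refl)
    also have "\<dots> < ereal (L1 - pen n (Suc K))"
      using elim(2,3) pen_nonneg[of n] by (simp add: divide_less_eq)
    also have "\<dots> \<le> crit ell \<Theta> pen Z n (Suc K) \<omega>"
      unfolding crit_def L1_def using \<open>\<theta>' \<in> \<Theta> (Suc K)\<close>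
      by (metis SUP_upper ereal_minus(1) ereal_minus_mono order_refl)
    finally show ?case .
  qed
  qed
qed

section \<open>From the criterion to the selected orders\<close>

lemma enat_less_Khat_L:
  assumes "\<forall>K\<in>{1..K0}. crit ell \<Theta> pen Z n K \<omega> < crit ell \<Theta> pen Z n (Suc K) \<omega>"
  shows "enat K0 < Khat_L ell \<Theta> pen Z n \<omega>"
proof (cases "\<exists>K\<ge>1. crit ell \<Theta> pen Z n K \<omega> \<ge> crit ell \<Theta> pen Z n (Suc K) \<omega>")
  case True
  define m where "m = (LEAST K. K \<ge> 1 \<and> crit ell \<Theta> pen Z n K \<omega> \<ge> crit ell \<Theta> pen Z n (Suc K) \<omega>)"
  have "m \<ge> 1 \<and> crit ell \<Theta> pen Z n m \<omega> \<ge> crit ell \<Theta> pen Z n (Suc m) \<omega>"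
    unfolding m_def by (rule LeastI_ex) (rule True)
  with assms have "K0 < m" by (meson atLeastAtMost_iff leD not_le_imp_less)
  then show ?thesis unfolding Khat_L_def m_def[symmetric] using True by simp
qed (auto simp: Khat_L_def)

lemma enat_less_Khat_G:
  assumes "\<forall>K\<in>{1..K0}. crit ell \<Theta> pen Z n K \<omega> < crit ell \<Theta> pen Z n (Suc K) \<omega>"
  shows "enat K0 < Khat_G ell \<Theta> pen Z n \<omega>"
proof (cases "\<exists>K\<ge>1. \<forall>K'\<ge>1. crit ell \<Theta> pen Z n K' \<omega> \<le> crit ell \<Theta> pen Z n K \<omega>")
  case True
  define m where "m = (LEAST K. K \<ge> 1 \<and> (\<forall>K'\<ge>1. crit ell \<Theta> pen Z n K' \<omega> \<le> crit ell \<Theta> pen Z n K \<omega>))"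
  have "m \<ge> 1 \<and> (\<forall>K'\<ge>1. crit ell \<Theta> pen Z n K' \<omega> \<le> crit ell \<Theta> pen Z n m \<omega>)"
    unfolding m_def by (rule LeastI_ex) (use True in blast)
  with assms have "K0 < m" by (metis atLeastAtMost_iff le_SucI leD not_le_imp_less)
  then show ?thesis unfolding Khat_G_def m_def[symmetric] using True by simp
qed (auto simp: Khat_G_def)

lemma liminf_enat_eq_infinity:
  fixes f :: "nat \<Rightarrow> enat"
  assumes "\<And>K. eventually (\<lambda>n. enat K < f n) sequentially"
  shows "liminf f = \<infinity>"
proof -
  have "\<infinity> \<le> liminf f"
    unfolding le_Liminf_iff using assms by (metis enat_ord_simps(4) not_enat_eq)
  then show ?thesis by (simp add: top_unique[unfolded top_enat_def])
qed

lemma liminf_Khat_eq_infinity: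
  assumes "\<And>K. K \<ge> 1 \<Longrightarrow> eventually (\<lambda>n. crit ell \<Theta> pen Z n K \<omega> < crit ell \<Theta> pen Z n (Suc K) \<omega>) sequentially"
  shows "liminf (\<lambda>n. Khat_L ell \<Theta> pen Z n \<omega>) = \<infinity> \<and> liminf (\<lambda>n. Khat_G ell \<Theta> pen Z n \<omega>) = \<infinity>"
proof -
  have increasing: "eventually (\<lambda>n. \<forall>K\<in>{1..K0}. crit ell \<Theta> pen Z n K \<omega> < crit ell \<Theta> pen Z n (Suc K) \<omega>) sequentially" for K0
    using assms by (intro eventually_ball_finite) auto
  show ?thesis
  proof (intro conjI liminf_enat_eq_infinity)
    show "eventually (\<lambda>n. enat K0 < Khat_L ell \<Theta> pen Z n \<omega>) sequentially" for K0
      using increasing[of K0] by eventually_elim (rule enat_less_Khat_L)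
    show "eventually (\<lambda>n. enat K0 < Khat_G ell \<Theta> pen Z n \<omega>) sequentially" for K0
      using increasing[of K0] by eventually_elim (rule enat_less_Khat_G)
  qed
qed

section \<open>Enveloped density models\<close>

locale enveloped_density_models =
  fixes \<mu> :: "'z::topological_space measure" and P :: "'z measure" and lstar :: "'z \<Rightarrow> real"
    and \<Theta> :: "nat \<Rightarrow> 't::metric_space set" and ell :: "'t \<Rightarrow> 'z \<Rightarrow> real" and l u :: "'z \<Rightarrow> real"
  assumes sets_\<mu>: "sets \<mu> = sets borel"
    and lstar_measurable: "lstar \<in> borel_measurable borel"
    and P_eq: "P = density \<mu> (\<lambda>z. ennreal (exp (lstar z)))"
    and P_prob: "prob_space P"
    and models: "\<And>K \<theta>. K \<ge> 1 \<Longrightarrow> \<theta> \<in> \<Theta> K \<Longrightarrow>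
      ell \<theta> \<in> borel_measurable borel \<and> prob_space (density \<mu> (\<lambda>z. ennreal (exp (ell \<theta> z))))"
    and integrable_u_l: "integrable P (\<lambda>z. u z - l z)"
    and lstar_between: "\<And>z. l z \<le> lstar z \<and> lstar z \<le> u z"
    and ell_between: "\<And>K \<theta> z. K \<ge> 1 \<Longrightarrow> \<theta> \<in> \<Theta> K \<Longrightarrow> l z \<le> ell \<theta> z \<and> ell \<theta> z \<le> u z"
begin

abbreviation model :: "nat \<Rightarrow> 'z measure set" where
  "model K \<equiv> (\<lambda>\<theta>. density \<mu> (\<lambda>z. ennreal (exp (ell \<theta> z)))) ` \<Theta> K"

lemma measurable_from_borel:
  fixes f :: "'z \<Rightarrow> real"
  assumes "f \<in> borel_measurable borel"
  shows "f \<in> borel_measurable P" "f \<in> borel_measurable \<mu>"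
proof -
  have "sets P = sets borel" using sets_\<mu> by (simp add: P_eq)
  then show "f \<in> borel_measurable P" using assms by (subst measurable_cong_sets[OF _ refl])
  show "f \<in> borel_measurable \<mu>" using assms by (subst measurable_cong_sets[OF sets_\<mu> refl])
qed

lemma integrable_lstar_minus_ell:
  "K \<ge> 1 \<Longrightarrow> \<theta> \<in> \<Theta> K \<Longrightarrow> integrable P (\<lambda>z. lstar z - ell \<theta> z)"
  using lstar_between ell_between models lstar_measurable
  by (intro integrable_diff_between[OF integrable_u_l] measurable_from_borel) auto

lemma rel_entropy_set_model:
  assumes "K \<ge> 1"
  shows "rel_entropy_set P (model K) = (INF \<theta>\<in>\<Theta> K. ereal (\<integral>z. lstar z - ell \<theta> z \<partial>P))"
  unfolding P_eq
proof (rule rel_entropy_set_density_image)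
  show "lstar \<in> borel_measurable \<mu>" using lstar_measurable by (rule measurable_from_borel)
  show "ell \<theta> \<in> borel_measurable \<mu> \<and> prob_space (density \<mu> (\<lambda>z. ennreal (exp (ell \<theta> z))))"
    if "\<theta> \<in> \<Theta> K" for \<theta> using models[OF assms that] measurable_from_borel by blast
  show "integrable (density \<mu> (\<lambda>z. ennreal (exp (lstar z)))) (\<lambda>z. lstar z - ell \<theta> z)"
    if "\<theta> \<in> \<Theta> K" for \<theta> using integrable_lstar_minus_ell[OF assms that] by (simp add: P_eq)
qed

lemma P_notin_model: "0 < rel_entropy_set P Q \<Longrightarrow> P \<notin> Q"
  unfolding P_eq using lstar_measurable P_prob
  by (intro density_notin_if_rel_entropy_set_pos measurable_from_borel) (simp_all add: P_eq)

lemma AE_eventually_crit_less_crit_Suc_model: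
  fixes Z :: "nat \<Rightarrow> 'w \<Rightarrow> 'z"
  assumes iid: "prob_space M" "\<And>i. Z i \<in> measurable M borel"
      "prob_space.indep_vars M (\<lambda>_. borel) Z UNIV" "\<And>i. distr M borel (Z i) = P"
    and K: "K \<ge> 1" and "compact (\<Theta> K)" "\<And>z. continuous_on (\<Theta> K) (\<lambda>\<theta>. ell \<theta> z)"
    and "\<And>n. 0 < pen n K" "(\<lambda>n. pen n (Suc K) / real n) \<longlonglongrightarrow> 0"
    and "rel_entropy_set P (model (Suc K)) < rel_entropy_set P (model K)"
  shows "AE \<omega> in M. eventually (\<lambda>n. crit ell \<Theta> pen Z n K \<omega> < crit ell \<Theta> pen Z n (Suc K) \<omega>) sequentially"
proof -
  obtain \<theta>1 a where "\<theta>1 \<in> \<Theta> (Suc K)" "a > 0"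
    and gap: "\<And>\<theta>. \<theta> \<in> \<Theta> K \<Longrightarrow> a < (\<integral>z. lstar z - ell \<theta> z \<partial>P) - (\<integral>z. lstar z - ell \<theta>1 z \<partial>P)"
    using assms(10) rel_entropy_set_model[OF K] rel_entropy_set_model[of "Suc K"]
    by (auto elim!: INF_ereal_gap_witness)
  have parameter: "\<exists>K'\<ge>1. \<theta> \<in> \<Theta> K'" if "\<theta> \<in> insert \<theta>1 (\<Theta> K)" for \<theta>
    using that K \<open>\<theta>1 \<in> \<Theta> (Suc K)\<close> by (cases "\<theta> = \<theta>1") auto
  show ?thesis
  proof (rule prob_space.AE_eventually_crit_less_crit_Suc[where \<theta>'=\<theta>1 and l=l and u=u, OF iid])
    show "ell \<theta> \<in> borel_measurable borel" "l z \<le> ell \<theta> z \<and> ell \<theta> z \<le> u z"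
      if "\<theta> \<in> insert \<theta>1 (\<Theta> K)" for \<theta> z
      using parameter[OF that] models ell_between by blast+
    show "a < (\<integral>z. ell \<theta>1 z - ell \<theta> z \<partial>P)" if "\<theta> \<in> \<Theta> K" for \<theta>
    proof -
      have "(\<integral>z. lstar z - ell \<theta> z \<partial>P) - (\<integral>z. lstar z - ell \<theta>1 z \<partial>P)
          = (\<integral>z. (lstar z - ell \<theta> z) - (lstar z - ell \<theta>1 z) \<partial>P)"
        using integrable_lstar_minus_ell K that \<open>\<theta>1 \<in> \<Theta> (Suc K)\<close>
        by (intro Bochner_Integration.integral_diff[symmetric]) auto
      also have "\<dots> = (\<integral>z. ell \<theta>1 z - ell \<theta> z \<partial>P)"
        by (rule Bochner_Integration.integral_cong) auto
      finally show ?thesis using gap[OF that] by simp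
    qed
    show "0 \<le> pen n K" for n using assms(8) by (rule less_imp_le)
  qed (use assms(6,7,9) integrable_u_l \<open>\<theta>1 \<in> \<Theta> (Suc K)\<close> \<open>a > 0\<close> in auto)
qed

end

theorem theorem5:
  fixes \<mu> :: "'z::polish_space measure"
    and Pstar :: "'z measure"
    and lstar :: "'z \<Rightarrow> real"
    and M :: "'w measure"
    and Z :: "nat \<Rightarrow> 'w \<Rightarrow> 'z"
    and \<Theta> :: "nat \<Rightarrow> 't::metric_space set"
    and ell :: "'t \<Rightarrow> 'z \<Rightarrow> real"
    and l u :: "'z \<Rightarrow> real"
    and pen :: "nat \<Rightarrow> nat \<Rightarrow> real"
  defines "Mdl \<equiv> (\<lambda>K. (\<lambda>\<theta>. density \<mu> (\<lambda>z. ennreal (exp (ell \<theta> z)))) ` \<Theta> K)"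
  assumes mu: "sigma_finite_measure \<mu>" "sets \<mu> = sets (borel :: 'z measure)"
    and Pstar: "lstar \<in> borel_measurable borel"
      "Pstar = density \<mu> (\<lambda>z. ennreal (exp (lstar z)))" "prob_space Pstar"
    and models: "\<And>K \<theta>. K \<ge> 1 \<Longrightarrow> \<theta> \<in> \<Theta> K \<Longrightarrow>
        ell \<theta> \<in> borel_measurable borel \<and> prob_space (density \<mu> (\<lambda>z. ennreal (exp (ell \<theta> z))))"
    and nested: "\<And>K. K \<ge> 1 \<Longrightarrow> \<Theta> K \<subseteq> \<Theta> (Suc K)"
    and iid: "prob_space M" "\<And>i. Z i \<in> measurable M borel"
      "prob_space.indep_vars M (\<lambda>_. borel) Z UNIV"
      "\<And>i. distr M borel (Z i) = Pstar"
    and A1: "\<And>K. K \<ge> 1 \<Longrightarrow> compact (\<Theta> K)"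
      "\<And>K. K \<ge> 1 \<Longrightarrow> compactin weak_topology (Mdl K)"
    and A2: "\<And>K z. K \<ge> 1 \<Longrightarrow> continuous_on (\<Theta> K) (\<lambda>\<theta>. ell \<theta> z)"
    and A3: "integrable Pstar (\<lambda>z. u z - l z)"
      "\<And>z. l z \<le> lstar z \<and> lstar z \<le> u z"
      "\<And>K \<theta> z. K \<ge> 1 \<Longrightarrow> \<theta> \<in> \<Theta> K \<Longrightarrow> l z \<le> ell \<theta> z \<and> ell \<theta> z \<le> u z"
    and A4: "\<And>n K. K \<ge> 1 \<Longrightarrow> pen n K > 0"
      "\<And>n K K'. 1 \<le> K \<Longrightarrow> K \<le> K' \<Longrightarrow> pen n K \<le> pen n K'"
      "\<And>K. K \<ge> 1 \<Longrightarrow> filterlim (\<lambda>n. pen n K) at_top sequentially"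
      "\<And>K. K \<ge> 1 \<Longrightarrow> (\<lambda>n. pen n K / real n) \<longlonglongrightarrow> 0"
    and gaps: "\<And>K. K \<ge> 1 \<Longrightarrow>
        0 < rel_entropy_set Pstar (Mdl (Suc K)) \<and>
        rel_entropy_set Pstar (Mdl (Suc K)) < rel_entropy_set Pstar (Mdl K)"
  shows "Pstar \<notin> (\<Union>K\<in>{1..}. Mdl K) \<and>
    (AE \<omega> in M. liminf (\<lambda>n. Khat_L ell \<Theta> pen Z n \<omega>) = \<infinity> \<and>
                 liminf (\<lambda>n. Khat_G ell \<Theta> pen Z n \<omega>) = \<infinity>)"
proof -
  interpret enveloped_density_models \<mu> Pstar lstar \<Theta> ell l u
    by (rule enveloped_density_models.intro) (fact mu(2) Pstar models A3)+
  have "Pstar \<notin> Mdl K" if "K \<ge> 1" for K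
    using gaps[OF that] unfolding Mdl_def by (meson P_notin_model order.strict_trans)
  moreover have "AE \<omega> in M. \<forall>K. K \<ge> 1 \<longrightarrow>
      eventually (\<lambda>n. crit ell \<Theta> pen Z n K \<omega> < crit ell \<Theta> pen Z n (Suc K) \<omega>) sequentially"
    unfolding AE_all_countable
  proof
    fix K :: nat
    have "AE \<omega> in M. eventually (\<lambda>n. crit ell \<Theta> pen Z n K \<omega> < crit ell \<Theta> pen Z n (Suc K) \<omega>) sequentially"
      if K: "K \<ge> 1"
      by (rule AE_eventually_crit_less_crit_Suc_model[OF iid K])
        (use A1(1) A2 A4(1) A4(4)[of "Suc K"] gaps[OF K] K in \<open>auto simp: Mdl_def\<close>)
    then show "AE \<omega> in M. K \<ge> 1 \<longrightarrow>
        eventually (\<lambda>n. crit ell \<Theta> pen Z n K \<omega> < crit ell \<Theta> pen Z n (Suc K) \<omega>) sequentially"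
      by (cases "K \<ge> 1") simp_all
  qed
  then have "AE \<omega> in M. liminf (\<lambda>n. Khat_L ell \<Theta> pen Z n \<omega>) = \<infinity> \<and>
      liminf (\<lambda>n. Khat_G ell \<Theta> pen Z n \<omega>) = \<infinity>"
    by eventually_elim (intro liminf_Khat_eq_infinity, blast)
  ultimately show ?thesis by auto
qed

end
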